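(* Let $n\ge1$. For any integers $l,l'>0$ and any $(j',\Theta'),(j,\Theta)\in\Omega$ with $(j',\Theta')\prec(j,\Theta)$, $$\Theta(P_{j,l})\boxplus\Theta'(P_{j',l'})\sim\Theta(P_{j,l})$$ over $\mathcal T^{\otimes n}$. Consequently $\mathfrak P'(\mathcal T^{\otimes n})=\bigsqcup_{m\ge0}\mathfrak P'_m(\mathcal T^{\otimes n})$ is a graded submonoid of $\mathfrak P(\mathcal T^{\otimes n})$, whose monoid structure is determined by these relations together with $\Theta(P_{j,l})\boxplus\Theta(P_{j,l'})\sim\Theta(P_{j,l+l'})$.
   Context: $\mathcal T$ is the Toeplitz algebra on $\ell^2(\mathbb Z_{\ge0})$ generated by the unilateral shift $\mathcal S$, $I$ its unit, $\mathcal K$ the compacts, $\sigma:\mathcal T\to C(\mathbb T)$ the symbol map ($\sigma(\mathcal S)=z$, kernel $\mathcal K$); $P_1$ is the rank-one projection onto $\mathbb C e_0$. $\mathcal T^{\otimes n}$ is the spatial tensor product, with unit $\tilde I$, and $\sigma_n:=\sigma^{\otimes n}:\mathcal T^{\otimes n}\to C(\mathbb T^n)$. For a unital C*-algebra $A$, $M_\infty(A)=\bigcup_k M_k(A)$ (with $x\mapsto x\boxplus 0$), $GL_\infty(A)=\bigcup_k GL_k(A)$ (with $x\mapsto x\boxplus1$), $\boxplus$ is block diagonal sum and $\boxplus^l x$ its $l$-fold iterate; idempotents $P,Q\in M_\infty(A)$ are equivalent, $P\sim Q$, if $UPU^{-1}=Q$ for some $U\in GL_\infty(A)$; $\mathfrak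 P(A)$ is the abelian monoid of equivalence classes under $\boxplus$. The rank of an idempotent $P$ over $\mathcal T^{\otimes n}$ is the (constant) rank of the matrix $\sigma_n(P)(t)$, $t\in\mathbb T^n$; $\mathfrak P_m(\mathcal T^{\otimes n})$ is the set of classes of rank $m$. For $0\le j\le n$, $l\ge0$: $P_{j,l}:=\boxplus^l\big((\otimes^jI)\otimes(\otimes^{n-j}P_1)\big)\in M_l(\mathcal T^{\otimes n})$. A permutation $\Theta$ of $\{1,\dots,n\}$ acts on $\mathcal T^{\otimes n}$ (entrywise on matrices) by permuting tensor factors; $\Theta$ is a $(j,n-j)$-shuffle if $\Theta(1)<\dots<\Theta(j)$ and $\Theta(j+1)<\dots<\Theta(n)$. $\Omega:=\{(j,\Theta):0\le j\le n,\ \Theta\text{ a }(j,n-j)\text{-shuffle}\}$, partially ordered by $(j',\Theta')\prec(j,\Theta)$ iff $\Theta(\{1,\dots,j\})\supsetneq\Theta'(\{1,\dots,j'\})$ (with $\{1,\dots,0\}=\emptyset$). $\mathfrak P'_0(\mathcal T^{\otimes n})$ is the set of classes of finite $\boxplus$-sums of projections $\Theta(P_{j,l})$ with $(j,\Theta)\in\Omega$, $j\le n-1$, $l\ge0$; for $m\ge1$, $\mathfrak P'_m(\mathcal T^{\otimes n}):=\{[\boxplus^m\tilde I]\}$ (note $P_{n,m}=\boxplus^m\tilde I$). *)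

theory Defs
  imports "HOL-Analysis.Analysis" "HOL-Combinatorics.Permutations"
begin

text \<open>
The spatial tensor product of n copies of the Toeplitz algebra
is realised as the C*-algebra on l2(N^n) generated by the n commuting shifts
S_i (shift in the i-th coordinate, i < n; tensor factor i+1 of the paper).  A bounded operator on l2(N^n)
is represented by its matrix ("kernel") K x y = <e_x, K e_y>, vanishing outside
N^n x N^n.
\<close>

type_synonym kern = "nat list \<Rightarrow> nat list \<Rightarrow> complex"

definition pts :: "nat \<Rightarrow> nat list set" where
  "pts n = {x. length x = n}"

definition kzero :: kern where
  "kzero = (\<lambda>x y. 0)"

definition kadd :: "kern \<Rightarrow> kern \<Rightarrow> kern" where
  "kadd A B = (\<lambda>x y. A x y + B x y)"

definition kscale :: "complex \<Rightarrow> kern \<Rightarrow> kern" where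
  "kscale c A = (\<lambda>x y. c * A x y)"

definition kadj :: "kern \<Rightarrow> kern" where
  "kadj A = (\<lambda>x y. cnj (A y x))"

text \<open>Operator composition (matrix product, an absolutely convergent sum for bounded operators).\<close>
definition kmult :: "nat \<Rightarrow> kern \<Rightarrow> kern \<Rightarrow> kern" where
  "kmult n A B = (\<lambda>x z. if x \<in> pts n \<and> z \<in> pts n
                          then (\<Sum>\<^sub>\<infinity> y\<in>pts n. A x y * B y z) else 0)"

definition kid :: "nat \<Rightarrow> kern" where
  "kid n = (\<lambda>x y. if x \<in> pts n \<and> x = y then 1 else 0)"

definition kshift :: "nat \<Rightarrow> nat \<Rightarrow> kern" where
  "kshift n i = (\<lambda>x y. if y \<in> pts n \<and> x = y[i := Suc (y ! i)] then 1 else 0)"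

definition vsupp :: "(nat list \<Rightarrow> complex) \<Rightarrow> nat list set" where
  "vsupp v = {x. v x \<noteq> 0}"

definition fvec :: "nat \<Rightarrow> (nat list \<Rightarrow> complex) set" where
  "fvec n = {v. finite (vsupp v) \<and> vsupp v \<subseteq> pts n}"

definition vnorm :: "(nat list \<Rightarrow> complex) \<Rightarrow> real" where
  "vnorm v = sqrt (\<Sum>x\<in>vsupp v. (cmod (v x))\<^sup>2)"

definition kform :: "kern \<Rightarrow> (nat list \<Rightarrow> complex) \<Rightarrow> (nat list \<Rightarrow> complex) \<Rightarrow> complex" where
  "kform K u v = (\<Sum>x\<in>vsupp u. \<Sum>y\<in>vsupp v. cnj (u x) * K x y * v y)"

definition kvals :: "nat \<Rightarrow> kern \<Rightarrow> real set" where
  "kvals n K = {cmod (kform K u v) | u v. u \<in> fvec n \<and> v \<in> fvec n \<and> vnorm u \<le> 1 \<and> vnorm v \<le> 1}"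

definition kbounded :: "nat \<Rightarrow> kern \<Rightarrow> bool" where
  "kbounded n K \<longleftrightarrow> bdd_above (kvals n K)"

definition knorm :: "nat \<Rightarrow> kern \<Rightarrow> real" where
  "knorm n K = Sup (kvals n K)"

definition ksupp :: "nat \<Rightarrow> kern \<Rightarrow> bool" where
  "ksupp n K \<longleftrightarrow> (\<forall>x y. K x y \<noteq> 0 \<longrightarrow> x \<in> pts n \<and> y \<in> pts n)"

inductive_set polyalg :: "nat \<Rightarrow> kern set" for n :: nat where
  pa_id: "kid n \<in> polyalg n"
| pa_shift: "i < n \<Longrightarrow> kshift n i \<in> polyalg n"
| pa_shift_adj: "i < n \<Longrightarrow> kadj (kshift n i) \<in> polyalg n"
| pa_add: "A \<in> polyalg n \<Longrightarrow> B \<in> polyalg n \<Longrightarrow> kadd A B \<in> polyalg n"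
| pa_scale: "A \<in> polyalg n \<Longrightarrow> kscale c A \<in> polyalg n"
| pa_mult: "A \<in> polyalg n \<Longrightarrow> B \<in> polyalg n \<Longrightarrow> kmult n A B \<in> polyalg n"

definition toeplitz :: "nat \<Rightarrow> kern set" where
  "toeplitz n = {K. ksupp n K \<and> kbounded n K \<and>
      (\<forall>e>0. \<exists>A\<in>polyalg n. knorm n (\<lambda>x y. K x y - A x y) < e)}"

text \<open>Matrices over T^(tensor n): entries indexed by nat, zero outside the k x k block
  (so M_k embeds in M_(k+1) via x \<mapsto> x \<boxplus> 0 literally as the same function).\<close>
type_synonym kmat = "nat \<Rightarrow> nat \<Rightarrow> kern"

definition inMk :: "nat \<Rightarrow> nat \<Rightarrow> kmat \<Rightarrow> bool" where
  "inMk n k M \<longleftrightarrow> (\<forall>i j. (i < k \<and> j < k \<longrightarrow> M i j \<in> toeplitz n) \<and>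
                           (\<not> (i < k \<and> j < k) \<longrightarrow> M i j = kzero))"

definition mmult :: "nat \<Rightarrow> nat \<Rightarrow> kmat \<Rightarrow> kmat \<Rightarrow> kmat" where
  "mmult n k A B = (\<lambda>i j. if i < k \<and> j < k
      then (\<lambda>x y. \<Sum>r<k. kmult n (A i r) (B r j) x y) else kzero)"

definition munit :: "nat \<Rightarrow> nat \<Rightarrow> kmat" where
  "munit n k = (\<lambda>i j. if i < k \<and> i = j then kid n else kzero)"

text \<open>Equivalence of idempotents in M_infinity: conjugate by some U in GL_k (k large enough
  to contain both; GL_k embeds in GL_infinity via x \<mapsto> x \<boxplus> 1).\<close>
definition mequiv :: "nat \<Rightarrow> kmat \<Rightarrow> kmat \<Rightarrow> bool" where
  "mequiv n P Q \<longleftrightarrow> (\<exists>k U V. inMk n k P \<and> inMk n k Q \<and> inMk n k U \<and> inMk n k V \<and>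
      mmult n k U V = munit n k \<and> mmult n k V U = munit n k \<and>
      mmult n k (mmult n k U P) V = Q)"

definition bsum :: "nat \<Rightarrow> kmat \<Rightarrow> kmat \<Rightarrow> kmat" where
  "bsum a A B = (\<lambda>i j. if i < a \<and> j < a then A i j
                       else if a \<le> i \<and> a \<le> j then B (i - a) (j - a) else kzero)"

text \<open>(tensor^j I) tensor (tensor^(n-j) P_1): projection onto span of e_x with x_i = 0 for j \<le> i < n.\<close>
definition pj :: "nat \<Rightarrow> nat \<Rightarrow> kern" where
  "pj n j = (\<lambda>x y. if x \<in> pts n \<and> x = y \<and> (\<forall>i. j \<le> i \<and> i < n \<longrightarrow> x ! i = 0) then 1 else 0)"

definition Pjl :: "nat \<Rightarrow> nat \<Rightarrow> nat \<Rightarrow> kmat" where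
  "Pjl n j l = (\<lambda>i k. if i < l \<and> i = k then pj n j else kzero)"

text \<open>Action of a permutation p of {0..<n} by permuting tensor factors:
  p(a_0 \<otimes> ... \<otimes> a_(n-1)) has a_k in tensor slot p k.\<close>
definition perm_k :: "nat \<Rightarrow> (nat \<Rightarrow> nat) \<Rightarrow> kern \<Rightarrow> kern" where
  "perm_k n p K = (\<lambda>x y. if x \<in> pts n \<and> y \<in> pts n
      then K (map (\<lambda>k. x ! p k) [0..<n]) (map (\<lambda>k. y ! p k) [0..<n]) else 0)"

definition perm_m :: "nat \<Rightarrow> (nat \<Rightarrow> nat) \<Rightarrow> kmat \<Rightarrow> kmat" where
  "perm_m n p M = (\<lambda>i j. perm_k n p (M i j))"

text \<open>(j, n-j)-shuffles (0-based indexing).\<close>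
definition shuffle :: "nat \<Rightarrow> nat \<Rightarrow> (nat \<Rightarrow> nat) \<Rightarrow> bool" where
  "shuffle n j p \<longleftrightarrow> p permutes {..<n} \<and> strict_mono_on {..<j} p \<and> strict_mono_on {j..<n} p"

definition Omega :: "nat \<Rightarrow> (nat \<times> (nat \<Rightarrow> nat)) set" where
  "Omega n = {(j, p). j \<le> n \<and> shuffle n j p}"

definition omega_prec :: "nat \<times> (nat \<Rightarrow> nat) \<Rightarrow> nat \<times> (nat \<Rightarrow> nat) \<Rightarrow> bool" where
  "omega_prec a b \<longleftrightarrow> (snd a ` {..<fst a} \<subset> snd b ` {..<fst b})"

text \<open>Finite \<boxplus>-sums of generators Theta(P_(j,l)), given as lists of (j, Theta, l).\<close>
fun gsize :: "(nat \<times> (nat \<Rightarrow> nat) \<times> nat) list \<Rightarrow> nat" where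
  "gsize [] = 0"
| "gsize ((j, p, l) # gs) = l + gsize gs"

fun gsum :: "nat \<Rightarrow> (nat \<times> (nat \<Rightarrow> nat) \<times> nat) list \<Rightarrow> kmat" where
  "gsum n [] = (\<lambda>i j. kzero)"
| "gsum n ((j, p, l) # gs) = bsum l (perm_m n p (Pjl n j l)) (gsum n gs)"

end

theory Submission
  imports Defs
begin

text \<open>All idempotents involved are diagonal in the basis \<open>e\<^sub>y\<close> of \<open>\<ell>\<^sup>2(\<nat>\<^sup>n)\<^sup>k\<close>:
  \<open>\<Theta>(P\<^sub>j\<^sub>,\<^sub>l)\<close> projects onto \<open>l\<close> copies of the points \<open>y\<close> supported in \<open>\<Theta>{1..j}\<close>.
  A bijection between two such sets of basis vectors whose matrix entries are partial injections
  lying in the algebra is a Murray--von Neumann equivalence, and the usual \<open>2 \<times> 2\<close> rotation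
  \<open>[[V, 1 - V V\<^sup>*], [1 - V\<^sup>* V, V\<^sup>*]]\<close> turns it into a similarity.  If
  \<open>\<Theta>'{1..j'} \<subset> \<Theta>{1..j}\<close>, pick a coordinate \<open>c\<close> in the difference: the power \<open>S\<^sub>c\<^sup>l\<^sup>'\<close> of
  the shift empties the points with \<open>y\<^sub>c < l'\<close> in one copy, and the \<open>l'\<close> copies of the smaller
  support move in there (Hilbert's hotel).  For \<open>\<Theta>{1..j} = {1..n}\<close> and a block permutation this
  absorbs any finite sum of proper generators into \<open>\<boxplus>\<^sup>m I\<close>.  Only the set \<open>\<Theta>{1..j}\<close> matters.\<close>

section \<open>Kernels of partial injections\<close>

definition pmap_kern :: "nat list set \<Rightarrow> (nat list \<Rightarrow> nat list) \<Rightarrow> kern" where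
  "pmap_kern D f = (\<lambda>x y. if y \<in> D \<and> x = f y then 1 else 0)"

lemma pmap_kern_empty [simp]: "pmap_kern {} f = kzero"
  by (simp add: pmap_kern_def kzero_def)

lemma pmap_kern_cong:
  "D = D' \<Longrightarrow> (\<And>y. y \<in> D \<Longrightarrow> f y = g y) \<Longrightarrow> pmap_kern D f = pmap_kern D' g"
  unfolding pmap_kern_def by (intro ext) auto

lemma kid_eq_pmap_kern: "kid n = pmap_kern (pts n) id"
  unfolding kid_def pmap_kern_def by (intro ext) auto

lemma kshift_eq_pmap_kern: "kshift n i = pmap_kern (pts n) (\<lambda>y. y[i := Suc (y ! i)])"
  unfolding kshift_def pmap_kern_def by (intro ext) auto

lemma kadj_pmap_kern:
  "inj_on f D \<Longrightarrow> kadj (pmap_kern D f) = pmap_kern (f ` D) (inv_into D f)"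
  unfolding kadj_def pmap_kern_def by (intro ext) auto

lemma infsum_single_point:
  fixes f :: "'a \<Rightarrow> complex"
  assumes "\<And>y. y \<in> S \<Longrightarrow> y \<noteq> a \<Longrightarrow> f y = 0"
  shows "infsum f S = (if a \<in> S then f a else 0)"
proof -
  have "infsum f S = infsum f (S \<inter> {a})"
    by (rule infsum_cong_neutral) (use assms in auto)
  also have "\<dots> = (if a \<in> S then f a else 0)"
    by (cases "a \<in> S") auto
  finally show ?thesis .
qed

lemma kmult_pmap_kern:
  assumes "D \<subseteq> pts n" "E \<subseteq> pts n" "f ` D \<subseteq> pts n"
  shows "kmult n (pmap_kern D f) (pmap_kern E g) = pmap_kern {y \<in> E. g y \<in> D} (f \<circ> g)"
proof (intro ext)
  fix x z
  have "x \<in> pts n \<Longrightarrow> z \<in> pts n \<Longrightarrow>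
      (\<Sum>\<^sub>\<infinity> y\<in>pts n. pmap_kern D f x y * pmap_kern E g y z) =
      (if g z \<in> pts n then pmap_kern D f x (g z) * pmap_kern E g (g z) z else 0)"
    by (rule infsum_single_point) (auto simp: pmap_kern_def)
  then show "kmult n (pmap_kern D f) (pmap_kern E g) x z =
      pmap_kern {y \<in> E. g y \<in> D} (f \<circ> g) x z"
    using assms by (auto simp: kmult_def pmap_kern_def)
qed

lemma kzero_polyalg: "kzero \<in> polyalg n"
proof -
  have "kscale 0 (kid n) = kzero"
    by (simp add: kscale_def kzero_def)
  then show ?thesis
    using polyalg.pa_scale[OF polyalg.pa_id] by metis
qed

lemma kadj_polyalg: "A \<in> polyalg n \<Longrightarrow> kadj A \<in> polyalg n"
proof (induction rule: polyalg.induct)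
  case pa_id
  have "kadj (kid n) = kid n"
    by (intro ext) (auto simp: kadj_def kid_def)
  then show ?case
    using polyalg.pa_id by simp
next
  case (pa_shift i)
  then show ?case
    by (rule polyalg.pa_shift_adj)
next
  case (pa_shift_adj i)
  have "kadj (kadj (kshift n i)) = kshift n i"
    by (simp add: kadj_def)
  then show ?case
    using polyalg.pa_shift[OF pa_shift_adj(1)] by simp
next
  case (pa_add A B)
  have "kadj (kadd A B) = kadd (kadj A) (kadj B)"
    by (simp add: kadj_def kadd_def)
  then show ?case
    using polyalg.pa_add[OF pa_add(3,4)] by simp
next
  case (pa_scale A c)
  have "kadj (kscale c A) = kscale (cnj c) (kadj A)"
    by (simp add: kadj_def kscale_def)
  then show ?case
    using polyalg.pa_scale[OF pa_scale(2)] by simp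
next
  case (pa_mult A B)
  have "kadj (kmult n A B) = kmult n (kadj B) (kadj A)"
    unfolding kadj_def kmult_def by (intro ext) (auto simp flip: infsum_cnj simp: mult.commute)
  then show ?case
    using polyalg.pa_mult[OF pa_mult(4,3)] by simp
qed

lemma sum_polyalg:
  "(\<And>r. r < (k::nat) \<Longrightarrow> F r \<in> polyalg n) \<Longrightarrow> (\<lambda>x y. \<Sum>r<k. F r x y) \<in> polyalg n"
proof (induction k)
  case 0
  then show ?case
    using kzero_polyalg by (simp add: kzero_def)
next
  case (Suc k)
  have "(\<lambda>x y. \<Sum>r<Suc k. F r x y) = kadd (\<lambda>x y. \<Sum>r<k. F r x y) (F k)"
    by (simp add: kadd_def)
  then show ?case
    using Suc polyalg.pa_add by simp
qed

lemma pmap_kern_Un_polyalg: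
  assumes "D1 \<inter> D2 = {}" "pmap_kern D1 f \<in> polyalg n" "pmap_kern D2 f \<in> polyalg n"
  shows "pmap_kern (D1 \<union> D2) f \<in> polyalg n"
proof -
  have "pmap_kern (D1 \<union> D2) f = kadd (pmap_kern D1 f) (pmap_kern D2 f)"
    using assms(1) unfolding pmap_kern_def kadd_def by (intro ext) auto
  then show ?thesis
    using polyalg.pa_add[OF assms(2,3)] by simp
qed

lemma pmap_kern_Diff_polyalg:
  assumes "E \<subseteq> D" "pmap_kern D f \<in> polyalg n" "pmap_kern E f \<in> polyalg n"
  shows "pmap_kern (D - E) f \<in> polyalg n"
proof -
  have "pmap_kern (D - E) f = kadd (pmap_kern D f) (kscale (-1) (pmap_kern E f))"
    using assms(1) unfolding pmap_kern_def kadd_def kscale_def by (intro ext) auto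
  then show ?thesis
    using polyalg.pa_add[OF assms(2) polyalg.pa_scale[OF assms(3)]] by simp
qed

lemma pmap_kern_restrict_polyalg:
  assumes "pmap_kern (pts n) f \<in> polyalg n" "f ` pts n \<subseteq> pts n"
    and "E \<subseteq> pts n" "pmap_kern E id \<in> polyalg n"
  shows "pmap_kern E f \<in> polyalg n"
proof -
  have "kmult n (pmap_kern (pts n) f) (pmap_kern E id) = pmap_kern E f"
    using assms(2,3) by (subst kmult_pmap_kern) (auto intro: pmap_kern_cong)
  then show ?thesis
    using polyalg.pa_mult[OF assms(1,4)] by simp
qed

lemma sum_sq_le_1_if_vnorm_le_1:
  "vnorm u \<le> 1 \<Longrightarrow> (\<Sum>x\<in>vsupp u. (cmod (u x))\<^sup>2) \<le> 1"
  unfolding vnorm_def by (metis real_sqrt_le_1_iff)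

text \<open>Sum \<open>\<bar>u (f y)\<bar> \<bar>v y\<bar> \<le> (\<bar>u (f y)\<bar>\<^sup>2 + \<bar>v y\<bar>\<^sup>2) / 2\<close> over \<open>y\<close>; injectivity of \<open>f\<close>
  bounds the first half by \<open>\<parallel>u\<parallel>\<^sup>2 / 2\<close>.\<close>
lemma pmap_kern_form_bound:
  assumes inj: "inj_on f D" and u: "u \<in> fvec n" and v: "v \<in> fvec n"
    and nu: "vnorm u \<le> 1" and nv: "vnorm v \<le> 1"
  shows "cmod (kform (pmap_kern D f) u v) \<le> 1"
proof -
  let ?Su = "vsupp u" and ?Sv = "vsupp v"
  have fu: "finite ?Su" and fv: "finite ?Sv"
    using u v by (auto simp: fvec_def)
  define T where "T = {y \<in> ?Sv. y \<in> D \<and> f y \<in> ?Su}"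
  have inner: "(\<Sum>x\<in>?Su. cnj (u x) * pmap_kern D f x y * v y) =
      (if y \<in> T then cnj (u (f y)) * v y else 0)" if "y \<in> ?Sv" for y
  proof -
    have "(\<Sum>x\<in>?Su. cnj (u x) * pmap_kern D f x y * v y) =
        (\<Sum>x\<in>?Su. if x = f y then (if y \<in> D then cnj (u (f y)) * v y else 0) else 0)"
      by (rule sum.cong) (auto simp: pmap_kern_def)
    then show ?thesis
      using fu that by (simp add: sum.delta' T_def)
  qed
  have "kform (pmap_kern D f) u v = (\<Sum>y\<in>?Sv. \<Sum>x\<in>?Su. cnj (u x) * pmap_kern D f x y * v y)"
    unfolding kform_def by (rule sum.swap)
  also have "\<dots> = (\<Sum>y\<in>?Sv. if y \<in> T then cnj (u (f y)) * v y else 0)"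
    using inner by (rule sum.cong[OF refl])
  finally have "cmod (kform (pmap_kern D f) u v) \<le>
      (\<Sum>y\<in>?Sv. cmod (if y \<in> T then cnj (u (f y)) * v y else 0))"
    by (simp only: norm_sum)
  also have "\<dots> \<le> (\<Sum>y\<in>?Sv. (if y \<in> T then (cmod (u (f y)))\<^sup>2 / 2 else 0) + (cmod (v y))\<^sup>2 / 2)"
  proof (rule sum_mono)
    fix y
    have "cmod (u (f y)) * cmod (v y) \<le> (cmod (u (f y)))\<^sup>2 / 2 + (cmod (v y))\<^sup>2 / 2"
      using sum_squares_bound[of "cmod (u (f y))" "cmod (v y)"]
      by (simp add: power2_eq_square field_simps)
    then show "cmod (if y \<in> T then cnj (u (f y)) * v y else 0) \<le>
        (if y \<in> T then (cmod (u (f y)))\<^sup>2 / 2 else 0) + (cmod (v y))\<^sup>2 / 2"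
      by (auto simp: norm_mult)
  qed
  also have "\<dots> = (\<Sum>y\<in>T. (cmod (u (f y)))\<^sup>2) / 2 + (\<Sum>y\<in>?Sv. (cmod (v y))\<^sup>2) / 2"
    using fv by (simp add: sum.distrib sum.If_cases T_def sum_divide_distrib Int_def)
  also have "(\<Sum>y\<in>T. (cmod (u (f y)))\<^sup>2) = (\<Sum>x\<in>f ` T. (cmod (u x))\<^sup>2)"
    using inj by (subst sum.reindex) (auto simp: T_def intro: inj_on_subset)
  also have "\<dots> \<le> (\<Sum>x\<in>?Su. (cmod (u x))\<^sup>2)"
    using fu by (intro sum_mono2) (auto simp: T_def)
  finally show ?thesis
    using sum_sq_le_1_if_vnorm_le_1[OF nu] sum_sq_le_1_if_vnorm_le_1[OF nv] by linarith
qed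

lemma kvals_zero: "kvals n (\<lambda>x y. 0) = {0}"
proof -
  have "(\<lambda>x. 0) \<in> fvec n" "vnorm (\<lambda>x. 0) = 0"
    by (simp_all add: fvec_def vnorm_def vsupp_def)
  then show ?thesis
    unfolding kvals_def kform_def by force
qed

lemma pmap_kern_toeplitz:
  assumes "D \<subseteq> pts n" "f ` D \<subseteq> pts n" "inj_on f D" "pmap_kern D f \<in> polyalg n"
  shows "pmap_kern D f \<in> toeplitz n"
  unfolding toeplitz_def
proof (intro CollectI conjI allI impI)
  show "ksupp n (pmap_kern D f)"
    using assms(1,2) by (auto simp: ksupp_def pmap_kern_def)
  show "kbounded n (pmap_kern D f)"
    unfolding kbounded_def bdd_above_def kvals_def using pmap_kern_form_bound[OF assms(3)] by blast
  fix e :: real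
  assume "0 < e"
  moreover have "knorm n (\<lambda>x y. pmap_kern D f x y - pmap_kern D f x y) = 0"
    by (simp add: knorm_def kvals_zero)
  ultimately show "\<exists>A\<in>polyalg n. knorm n (\<lambda>x y. pmap_kern D f x y - A x y) < e"
    using assms(4) by force
qed

section \<open>Lattice points supported in a set of coordinates\<close>

definition supported_pts :: "nat \<Rightarrow> nat set \<Rightarrow> nat list set" where
  "supported_pts n W = {y \<in> pts n. \<forall>k \<in> {..<n} - W. y ! k = 0}"

lemma supported_pts_iff:
  "y \<in> supported_pts n W \<longleftrightarrow> length y = n \<and> (\<forall>k<n. k \<notin> W \<longrightarrow> y ! k = 0)"
  by (auto simp: supported_pts_def pts_def)

lemma supported_pts_subset: "supported_pts n W \<subseteq> pts n"
  by (auto simp: supported_pts_def)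

lemma supported_pts_all: "supported_pts n {..<n} = pts n"
  by (auto simp: supported_pts_def)

lemma inj_on_coord_Suc:
  assumes "i < n"
  shows "inj_on (\<lambda>y. y[i := Suc (y ! i)]) (pts n)"
proof (rule inj_onI)
  fix y z
  assume y: "y \<in> pts n" and z: "z \<in> pts n" and eq: "y[i := Suc (y ! i)] = z[i := Suc (z ! i)]"
  have "y ! k = z ! k" if "k < n" for k
  proof -
    have "y[i := Suc (y ! i)] ! k = z[i := Suc (z ! i)] ! k"
      using eq by simp
    then show ?thesis
      using assms that y z by (cases "k = i") (auto simp: pts_def)
  qed
  then show "y = z"
    using y z by (intro nth_equalityI) (auto simp: pts_def)
qed

lemma pts_Diff_coord_Suc:
  assumes "i < n"
  shows "pts n - (\<lambda>y. y[i := Suc (y ! i)]) ` pts n = {y \<in> pts n. y ! i = 0}"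
proof (intro equalityI subsetI)
  fix y
  assume y: "y \<in> pts n - (\<lambda>y. y[i := Suc (y ! i)]) ` pts n"
  show "y \<in> {y \<in> pts n. y ! i = 0}"
  proof (rule ccontr)
    assume "y \<notin> {y \<in> pts n. y ! i = 0}"
    then have "y = (y[i := y ! i - 1])[i := Suc (y[i := y ! i - 1] ! i)]"
        "y[i := y ! i - 1] \<in> pts n"
      using y assms by (auto simp: pts_def)
    then show False
      using y by blast
  qed
next
  fix y
  assume y: "y \<in> {y \<in> pts n. y ! i = 0}"
  then have "y \<noteq> x[i := Suc (x ! i)]" if "x \<in> pts n" for x
    using assms that by (auto simp: pts_def)
  then show "y \<in> pts n - (\<lambda>y. y[i := Suc (y ! i)]) ` pts n"
    using y by blast
qed

text \<open>The projection onto \<open>y ! i = 0\<close> is \<open>1 - S\<^sub>i S\<^sub>i\<^sup>*\<close>.\<close>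
lemma coord_zero_polyalg:
  assumes i: "i < n"
  shows "pmap_kern {y \<in> pts n. y ! i = 0} id \<in> polyalg n"
proof -
  define s where "s y = y[i := Suc (y ! i)]" for y :: "nat list"
  have s_pts: "s ` pts n \<subseteq> pts n"
    by (auto simp: s_def pts_def)
  have kshift_s: "kshift n i = pmap_kern (pts n) s"
    by (simp add: kshift_eq_pmap_kern s_def[abs_def])
  have "inj_on s (pts n)"
    using inj_on_coord_Suc[OF i] by (simp add: s_def[abs_def])
  then have "kadj (kshift n i) = pmap_kern (s ` pts n) (inv_into (pts n) s)"
    unfolding kshift_s by (rule kadj_pmap_kern)
  moreover have "kmult n (kshift n i) (pmap_kern (s ` pts n) (inv_into (pts n) s)) =
      pmap_kern (s ` pts n) id"
    unfolding kshift_s using s_pts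
    by (subst kmult_pmap_kern) (auto simp: f_inv_into_f inv_into_into intro!: pmap_kern_cong)
  ultimately have "pmap_kern (s ` pts n) id \<in> polyalg n"
    using polyalg.pa_mult[OF polyalg.pa_shift[OF i] polyalg.pa_shift_adj[OF i]] by simp
  then have "pmap_kern (pts n - s ` pts n) id \<in> polyalg n"
    using s_pts polyalg.pa_id[of n] by (intro pmap_kern_Diff_polyalg) (auto simp: kid_eq_pmap_kern)
  moreover have "pts n - s ` pts n = {y \<in> pts n. y ! i = 0}"
    using pts_Diff_coord_Suc[OF i] by (simp add: s_def[abs_def])
  ultimately show ?thesis
    by simp
qed

lemma vanishing_pts_polyalg:
  assumes "Z \<subseteq> {..<n}"
  shows "pmap_kern {y \<in> pts n. \<forall>k \<in> Z. y ! k = 0} id \<in> polyalg n"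
proof -
  have "finite Z"
    using assms finite_subset by blast
  then show ?thesis
    using assms
  proof (induction Z rule: finite_induct)
    case empty
    have "{y \<in> pts n. \<forall>k \<in> {}. y ! k = 0} = pts n"
      by simp
    then show ?case
      using polyalg.pa_id kid_eq_pmap_kern by metis
  next
    case (insert i Z)
    have i: "i < n" and Z: "Z \<subseteq> {..<n}"
      using insert.prems by auto
    have eq: "kmult n (pmap_kern {y \<in> pts n. y ! i = 0} id)
        (pmap_kern {y \<in> pts n. \<forall>k \<in> Z. y ! k = 0} id) =
        pmap_kern {y \<in> pts n. \<forall>k \<in> insert i Z. y ! k = 0} id"
      by (subst kmult_pmap_kern) (auto intro: pmap_kern_cong)
    from polyalg.pa_mult[OF coord_zero_polyalg[OF i] insert.IH[OF Z]] show ?case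
      unfolding eq .
  qed
qed

lemma supported_pts_polyalg: "pmap_kern (supported_pts n W) id \<in> polyalg n"
  unfolding supported_pts_def by (rule vanishing_pts_polyalg) auto

lemma coord_shift_polyalg:
  assumes c: "c < n"
  shows "pmap_kern (pts n) (\<lambda>y. y[c := y ! c + b]) \<in> polyalg n"
proof (induction b)
  case 0
  have "pmap_kern (pts n) (\<lambda>y. y[c := y ! c + 0]) = kid n"
    unfolding kid_eq_pmap_kern by (rule pmap_kern_cong) auto
  then show ?case
    using polyalg.pa_id by simp
next
  case (Suc b)
  have "kmult n (kshift n c) (pmap_kern (pts n) (\<lambda>y. y[c := y ! c + b])) =
      pmap_kern (pts n) (\<lambda>y. y[c := y ! c + Suc b])"
    unfolding kshift_eq_pmap_kern using c
    by (subst kmult_pmap_kern) (auto simp: pts_def intro!: pmap_kern_cong)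
  then show ?case
    using polyalg.pa_mult[OF polyalg.pa_shift[OF c] Suc.IH] by simp
qed

lemma supported_coord_shift_polyalg:
  "c < n \<Longrightarrow> pmap_kern (supported_pts n W) (\<lambda>y. y[c := y ! c + b]) \<in> polyalg n"
  by (rule pmap_kern_restrict_polyalg[OF coord_shift_polyalg _ supported_pts_subset
        supported_pts_polyalg])
    (auto simp: pts_def)

section \<open>Matrices of partial injections\<close>

text \<open>A point \<open>(i, y)\<close> stands for the basis vector \<open>e\<^sub>y\<close> in the \<open>i\<close>-th summand of
  \<open>\<ell>\<^sup>2(\<nat>\<^sup>n)\<^sup>k\<close>, so a partial injection \<open>t\<close> of such points defines a \<open>k \<times> k\<close> matrix over
  \<open>\<T>\<^sup>\<otimes>\<^sup>n\<close> whose entries are partial injection kernels.\<close>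
type_synonym bpt = "nat \<times> nat list"

definition pmap_mat :: "bpt set \<Rightarrow> (bpt \<Rightarrow> bpt) \<Rightarrow> kmat" where
  "pmap_mat D t = (\<lambda>i j. pmap_kern {y. (j, y) \<in> D \<and> fst (t (j, y)) = i} (\<lambda>y. snd (t (j, y))))"

definition alg_pmap :: "nat \<Rightarrow> bpt set \<Rightarrow> (bpt \<Rightarrow> bpt) \<Rightarrow> bool" where
  "alg_pmap n D t \<longleftrightarrow> (\<forall>i j. pmap_mat D t i j \<in> polyalg n)"

definition lattice_pmap :: "nat \<Rightarrow> bpt set \<Rightarrow> (bpt \<Rightarrow> bpt) \<Rightarrow> bool" where
  "lattice_pmap n D t \<longleftrightarrow> D \<subseteq> UNIV \<times> pts n \<and> t ` D \<subseteq> UNIV \<times> pts n"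

definition alg_set :: "nat \<Rightarrow> bpt set \<Rightarrow> bool" where
  "alg_set n C \<longleftrightarrow> (\<forall>j. pmap_kern {y. (j, y) \<in> C} id \<in> polyalg n)"

definition shift_blocks :: "nat \<Rightarrow> bpt \<Rightarrow> bpt" where
  "shift_blocks k = (\<lambda>z. (fst z + k, snd z))"

definition unshift_blocks :: "nat \<Rightarrow> bpt \<Rightarrow> bpt" where
  "unshift_blocks k = (\<lambda>z. (fst z - k, snd z))"

lemma shift_blocks_image_iff: "(j, y) \<in> shift_blocks k ` B \<longleftrightarrow> k \<le> j \<and> (j - k, y) \<in> B"
proof
  assume "k \<le> j \<and> (j - k, y) \<in> B"
  then show "(j, y) \<in> shift_blocks k ` B"
    by (intro image_eqI[of _ _ "(j - k, y)"]) (auto simp: shift_blocks_def)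
qed (auto simp: shift_blocks_def)

lemma shift_blocks_Times: "shift_blocks a ` ({..<b} \<times> S) = {a..<a + b} \<times> S"
proof (intro equalityI subsetI)
  fix z
  assume "z \<in> {a..<a + b} \<times> S"
  then show "z \<in> shift_blocks a ` ({..<b} \<times> S)"
    using shift_blocks_image_iff[of "fst z" "snd z" a] by auto
qed (auto simp: shift_blocks_def)

lemma inj_shift_blocks: "inj (shift_blocks k)"
  by (auto simp: inj_def shift_blocks_def prod_eq_iff)

lemma unshift_shift_blocks [simp]: "unshift_blocks k (shift_blocks k z) = z"
  by (simp add: shift_blocks_def unshift_blocks_def)

lemma bij_betw_shift_blocks_conj:
  assumes "bij_betw f A B"
  shows "bij_betw (shift_blocks k \<circ> f \<circ> unshift_blocks k) (shift_blocks k ` A) (shift_blocks k ` B)"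
proof -
  have "bij_betw (unshift_blocks k) (shift_blocks k ` A) A"
    by (rule bij_betw_byWitness[where f'="shift_blocks k"]) auto
  moreover have "bij_betw (shift_blocks k) B (shift_blocks k ` B)"
    using inj_shift_blocks by (rule bij_betw_imageI[OF inj_on_subset]) auto
  ultimately show ?thesis
    using assms by (auto intro!: bij_betw_trans)
qed

lemma shift_blocks_shift_blocks: "shift_blocks (l + m) ` X = shift_blocks l ` shift_blocks m ` X"
  unfolding image_image by (rule image_cong) (auto simp: shift_blocks_def)

lemma Int_shift_blocks_empty: "A \<subseteq> {..<k} \<times> UNIV \<Longrightarrow> A \<inter> shift_blocks k ` B = {}"
  by (auto simp: shift_blocks_def)

lemma pmap_mat_cong:
  "D = D' \<Longrightarrow> (\<And>z. z \<in> D \<Longrightarrow> t z = t' z) \<Longrightarrow> pmap_mat D t = pmap_mat D' t'"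
  unfolding pmap_mat_def pmap_kern_def by (intro ext) auto

lemma alg_pmap_congD:
  "alg_pmap n D t \<Longrightarrow> (\<And>z. z \<in> D \<Longrightarrow> t z = t' z) \<Longrightarrow> alg_pmap n D t'"
  unfolding alg_pmap_def using pmap_mat_cong by metis

lemma pmap_mat_id_entry:
  "pmap_mat C id i j = (if i = j then pmap_kern {y. (j, y) \<in> C} id else kzero)"
  unfolding pmap_mat_def by (auto simp: pmap_kern_def kzero_def intro!: ext)

lemma munit_eq_pmap_mat: "munit n k = pmap_mat ({..<k} \<times> pts n) id"
  unfolding munit_def pmap_mat_def kid_eq_pmap_kern
  by (intro ext) (auto simp: pmap_kern_def kzero_def)

lemma pmap_mat_mult_entry:
  assumes t: "lattice_pmap n D t" and s: "lattice_pmap n E s" and K: "fst ` s ` E \<subseteq> {..<K}"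
  shows "(\<lambda>x y. \<Sum>r<K. kmult n (pmap_mat D t i r) (pmap_mat E s r j) x y) =
    pmap_mat {z \<in> E. s z \<in> D} (t \<circ> s) i j"
proof (intro ext)
  fix x y
  have "kmult n (pmap_mat D t i r) (pmap_mat E s r j) x y =
      (if r = fst (s (j, y)) then pmap_mat {z \<in> E. s z \<in> D} (t \<circ> s) i j x y else 0)" for r
    unfolding pmap_mat_def using t s
    by (subst kmult_pmap_kern) (auto simp: lattice_pmap_def pmap_kern_def prod_eq_iff)
  then show "(\<Sum>r<K. kmult n (pmap_mat D t i r) (pmap_mat E s r j) x y) =
      pmap_mat {z \<in> E. s z \<in> D} (t \<circ> s) i j x y"
    using K by (auto simp: pmap_mat_def pmap_kern_def)
qed

lemma mmult_pmap_mat: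
  assumes t: "lattice_pmap n D t" and s: "lattice_pmap n E s"
    and "E \<subseteq> {..<k} \<times> UNIV" "s ` E \<subseteq> {..<k} \<times> UNIV" "t ` D \<subseteq> {..<k} \<times> UNIV"
  shows "mmult n k (pmap_mat D t) (pmap_mat E s) = pmap_mat {z \<in> E. s z \<in> D} (t \<circ> s)"
proof (rule ext, rule ext)
  fix i j
  show "mmult n k (pmap_mat D t) (pmap_mat E s) i j = pmap_mat {z \<in> E. s z \<in> D} (t \<circ> s) i j"
  proof (cases "i < k \<and> j < k")
    case True
    have "fst ` s ` E \<subseteq> {..<k}"
      using assms(4) by auto
    then show ?thesis
      using True pmap_mat_mult_entry[OF t s] by (simp add: mmult_def)
  next
    case False
    then have "{y. (j, y) \<in> {z \<in> E. s z \<in> D} \<and> fst ((t \<circ> s) (j, y)) = i} = {}"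
      using assms(3,5) by fastforce
    then have "pmap_mat {z \<in> E. s z \<in> D} (t \<circ> s) i j = kzero"
      unfolding pmap_mat_def by (metis pmap_kern_empty)
    then show ?thesis
      using False unfolding mmult_def by presburger
  qed
qed

lemma inMk_pmap_mat:
  assumes "lattice_pmap n D t" "inj_on t D" "alg_pmap n D t"
    and "D \<subseteq> {..<k} \<times> UNIV" "t ` D \<subseteq> {..<k} \<times> UNIV"
  shows "inMk n k (pmap_mat D t)"
  unfolding inMk_def
proof (intro allI conjI impI)
  fix i j
  let ?E = "{y. (j, y) \<in> D \<and> fst (t (j, y)) = i}"
  show "pmap_mat D t i j \<in> toeplitz n"
    unfolding pmap_mat_def
  proof (rule pmap_kern_toeplitz)
    show "?E \<subseteq> pts n" "(\<lambda>y. snd (t (j, y))) ` ?E \<subseteq> pts n"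
      using assms(1) by (force simp: lattice_pmap_def)+
    show "inj_on (\<lambda>y. snd (t (j, y))) ?E"
      using assms(2) unfolding inj_on_def
      by (metis (mono_tags, lifting) mem_Collect_eq prod.expand prod.inject)
    show "pmap_kern ?E (\<lambda>y. snd (t (j, y))) \<in> polyalg n"
      using assms(3) by (simp add: alg_pmap_def pmap_mat_def)
  qed
  assume "\<not> (i < k \<and> j < k)"
  then have "?E = {}"
    using assms(4,5) by fastforce
  then show "pmap_mat D t i j = kzero"
    unfolding pmap_mat_def by (metis pmap_kern_empty)
qed

lemma alg_pmap_comp:
  assumes "alg_pmap n D t" "alg_pmap n E s" "lattice_pmap n D t" "lattice_pmap n E s"
    and "s ` E \<subseteq> D" "fst ` s ` E \<subseteq> {..<K}"
  shows "alg_pmap n E (t \<circ> s)"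
  unfolding alg_pmap_def
proof (intro allI)
  fix i j
  have "{z \<in> E. s z \<in> D} = E"
    using assms(5) by auto
  then have "pmap_mat E (t \<circ> s) i j =
      (\<lambda>x y. \<Sum>r<K. kmult n (pmap_mat D t i r) (pmap_mat E s r j) x y)"
    using pmap_mat_mult_entry[OF assms(3,4,6)] by simp
  also have "\<dots> \<in> polyalg n"
    using assms(1,2) by (intro sum_polyalg polyalg.pa_mult) (auto simp: alg_pmap_def)
  finally show "pmap_mat E (t \<circ> s) i j \<in> polyalg n" .
qed

lemma alg_pmap_Un:
  assumes "alg_pmap n D1 t" "alg_pmap n D2 t" "D1 \<inter> D2 = {}"
  shows "alg_pmap n (D1 \<union> D2) t"
  unfolding alg_pmap_def
proof (intro allI)
  fix i j
  let ?E = "\<lambda>D. {y. (j, y) \<in> D \<and> fst (t (j, y)) = i}"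
  have "pmap_mat (D1 \<union> D2) t i j = pmap_kern (?E D1 \<union> ?E D2) (\<lambda>y. snd (t (j, y)))"
    unfolding pmap_mat_def by (rule pmap_kern_cong) auto
  also have "\<dots> \<in> polyalg n"
    using assms by (intro pmap_kern_Un_polyalg) (auto simp: alg_pmap_def pmap_mat_def)
  finally show "pmap_mat (D1 \<union> D2) t i j \<in> polyalg n" .
qed

lemma alg_pmap_inv_into:
  assumes "inj_on t D" "alg_pmap n D t"
  shows "alg_pmap n (t ` D) (inv_into D t)"
  unfolding alg_pmap_def
proof (intro allI)
  fix i j
  have "pmap_mat (t ` D) (inv_into D t) i j = kadj (pmap_mat D t j i)"
  proof (intro ext)
    fix x y
    have "(j, y) \<in> t ` D \<and> inv_into D t (j, y) = (i, x) \<longleftrightarrow> (i, x) \<in> D \<and> t (i, x) = (j, y)"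
      using assms(1) by (metis f_inv_into_f inv_into_f_f inv_into_into image_eqI)
    then show "pmap_mat (t ` D) (inv_into D t) i j x y = kadj (pmap_mat D t j i) x y"
      unfolding pmap_mat_def pmap_kern_def kadj_def by (auto simp: prod_eq_iff)
  qed
  then show "pmap_mat (t ` D) (inv_into D t) i j \<in> polyalg n"
    using assms(2) kadj_polyalg by (simp add: alg_pmap_def)
qed

lemma alg_pmap_reindex_blocks:
  assumes "alg_set n C"
  shows "alg_pmap n C (\<lambda>z. (\<rho> (fst z), snd z))"
  unfolding alg_pmap_def
proof (intro allI)
  fix i j
  have "pmap_mat C (\<lambda>z. (\<rho> (fst z), snd z)) i j =
      (if \<rho> j = i then pmap_kern {y. (j, y) \<in> C} id else kzero)"
    unfolding pmap_mat_def by (intro ext) (auto simp: pmap_kern_def kzero_def)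
  then show "pmap_mat C (\<lambda>z. (\<rho> (fst z), snd z)) i j \<in> polyalg n"
    using assms kzero_polyalg by (simp add: alg_set_def)
qed

lemma alg_pmap_id: "alg_set n C \<Longrightarrow> alg_pmap n C id"
  using alg_pmap_reindex_blocks[of n C "\<lambda>j. j"] by (simp add: id_def)

lemma alg_pmap_shift_blocks_conj:
  assumes "alg_pmap n B g"
  shows "alg_pmap n (shift_blocks k ` B) (shift_blocks k \<circ> g \<circ> unshift_blocks k)"
  unfolding alg_pmap_def
proof (intro allI)
  fix i j
  have "{y. (j, y) \<in> shift_blocks k ` B \<and>
        fst ((shift_blocks k \<circ> g \<circ> unshift_blocks k) (j, y)) = i} =
      (if k \<le> i \<and> k \<le> j then {y. (j - k, y) \<in> B \<and> fst (g (j - k, y)) = i - k} else {})"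
    by (auto simp: shift_blocks_image_iff) (auto simp: shift_blocks_def unshift_blocks_def)
  then have "pmap_mat (shift_blocks k ` B) (shift_blocks k \<circ> g \<circ> unshift_blocks k) i j =
      (if k \<le> i \<and> k \<le> j then pmap_mat B g (i - k) (j - k) else kzero)"
    unfolding pmap_mat_def
    by (auto intro!: pmap_kern_cong simp: shift_blocks_def unshift_blocks_def)
  then show "pmap_mat (shift_blocks k ` B) (shift_blocks k \<circ> g \<circ> unshift_blocks k) i j \<in> polyalg n"
    using assms kzero_polyalg by (simp add: alg_pmap_def)
qed

lemma alg_set_Times: "pmap_kern S id \<in> polyalg n \<Longrightarrow> alg_set n (J \<times> S)"
  unfolding alg_set_def
proof
  fix j
  assume "pmap_kern S id \<in> polyalg n"
  moreover have "{y. (j, y) \<in> J \<times> S} = (if j \<in> J then S else {})"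
    by auto
  ultimately show "pmap_kern {y. (j, y) \<in> J \<times> S} id \<in> polyalg n"
    using kzero_polyalg by simp
qed

lemma alg_set_Un: "alg_set n A \<Longrightarrow> alg_set n B \<Longrightarrow> A \<inter> B = {} \<Longrightarrow> alg_set n (A \<union> B)"
  unfolding alg_set_def
proof
  fix j
  assume "\<forall>j. pmap_kern {y. (j, y) \<in> A} id \<in> polyalg n"
    and "\<forall>j. pmap_kern {y. (j, y) \<in> B} id \<in> polyalg n"
    and "A \<inter> B = {}"
  then have "pmap_kern ({y. (j, y) \<in> A} \<union> {y. (j, y) \<in> B}) id \<in> polyalg n"
    by (intro pmap_kern_Un_polyalg) auto
  moreover have "{y. (j, y) \<in> A \<union> B} = {y. (j, y) \<in> A} \<union> {y. (j, y) \<in> B}"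
    by auto
  ultimately show "pmap_kern {y. (j, y) \<in> A \<union> B} id \<in> polyalg n"
    by simp
qed

lemma alg_set_Diff_blocks:
  assumes "alg_set n A" "A \<subseteq> {..<k} \<times> pts n"
  shows "alg_set n ({..<k} \<times> pts n - A)"
  unfolding alg_set_def
proof
  fix j
  show "pmap_kern {y. (j, y) \<in> {..<k} \<times> pts n - A} id \<in> polyalg n"
  proof (cases "j < k")
    case True
    have "pmap_kern (pts n - {y. (j, y) \<in> A}) id \<in> polyalg n"
      using assms polyalg.pa_id[of n]
      by (intro pmap_kern_Diff_polyalg) (auto simp: alg_set_def kid_eq_pmap_kern)
    moreover have "{y. (j, y) \<in> {..<k} \<times> pts n - A} = pts n - {y. (j, y) \<in> A}"
      using True by auto
    ultimately show ?thesis
      by simp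
  next
    case False
    then have "{y. (j, y) \<in> {..<k} \<times> pts n - A} = {}"
      by auto
    then show ?thesis
      by (metis pmap_kern_empty kzero_polyalg)
  qed
qed

lemma alg_set_shift_blocks:
  assumes "alg_set n A"
  shows "alg_set n (shift_blocks k ` A)"
  unfolding alg_set_def
proof
  fix j
  have "{y. (j, y) \<in> shift_blocks k ` A} = (if k \<le> j then {y. (j - k, y) \<in> A} else {})"
    by (auto simp: shift_blocks_image_iff)
  then show "pmap_kern {y. (j, y) \<in> shift_blocks k ` A} id \<in> polyalg n"
    using assms kzero_polyalg by (simp add: alg_set_def)
qed

section \<open>Equivalence of sets of basis vectors\<close>

definition bounded_blocks :: "nat \<Rightarrow> bpt set \<Rightarrow> bool" where
  "bounded_blocks n A \<longleftrightarrow> (\<exists>k. A \<subseteq> {..<k} \<times> pts n)"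

text \<open>Murray--von Neumann equivalence of the projections onto \<open>A\<close> and \<open>B\<close>, witnessed by a
  partial isometry of the algebra that permutes basis vectors.\<close>
definition alg_equiv :: "nat \<Rightarrow> bpt set \<Rightarrow> bpt set \<Rightarrow> bool" where
  "alg_equiv n A B \<longleftrightarrow>
    bounded_blocks n A \<and> bounded_blocks n B \<and> (\<exists>t. bij_betw t A B \<and> alg_pmap n A t)"

lemma bounded_blocks_Times: "J \<subseteq> {..<k} \<Longrightarrow> S \<subseteq> pts n \<Longrightarrow> bounded_blocks n (J \<times> S)"
  unfolding bounded_blocks_def by blast

lemma bounded_blocks_Un: "bounded_blocks n A \<Longrightarrow> bounded_blocks n B \<Longrightarrow> bounded_blocks n (A \<union> B)"
proof -
  assume "bounded_blocks n A" "bounded_blocks n B"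
  then obtain k1 k2 where "A \<subseteq> {..<k1} \<times> pts n" "B \<subseteq> {..<k2} \<times> pts n"
    by (auto simp: bounded_blocks_def)
  then have "A \<union> B \<subseteq> {..<max k1 k2} \<times> pts n"
    by auto
  then show ?thesis
    by (auto simp: bounded_blocks_def)
qed

lemma bounded_blocks_shift_blocks: "bounded_blocks n A \<Longrightarrow> bounded_blocks n (shift_blocks k ` A)"
proof -
  assume "bounded_blocks n A"
  then obtain m where "A \<subseteq> {..<m} \<times> pts n"
    by (auto simp: bounded_blocks_def)
  then have "shift_blocks k ` A \<subseteq> {..<m + k} \<times> pts n"
    by (auto simp: shift_blocks_def)
  then show ?thesis
    by (auto simp: bounded_blocks_def)
qed

lemma alg_equiv_refl: "alg_set n C \<Longrightarrow> bounded_blocks n C \<Longrightarrow> alg_equiv n C C"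
  unfolding alg_equiv_def using alg_pmap_id bij_betw_id by blast

lemma alg_equiv_trans [trans]:
  assumes "alg_equiv n A B" "alg_equiv n B C"
  shows "alg_equiv n A C"
proof -
  obtain f where f: "bij_betw f A B" "alg_pmap n A f"
    using assms(1) by (auto simp: alg_equiv_def)
  obtain g where g: "bij_betw g B C" "alg_pmap n B g"
    using assms(2) by (auto simp: alg_equiv_def)
  obtain k where B: "B \<subseteq> {..<k} \<times> pts n"
    using assms(1) by (auto simp: alg_equiv_def bounded_blocks_def)
  have "alg_pmap n A (g \<circ> f)"
  proof (rule alg_pmap_comp[OF g(2) f(2)])
    show "lattice_pmap n B g" "lattice_pmap n A f"
      using assms f(1) g(1)
      by (auto simp: lattice_pmap_def alg_equiv_def bounded_blocks_def bij_betw_def)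
    show "f ` A \<subseteq> B" "fst ` f ` A \<subseteq> {..<k}"
      using f(1) B by (auto simp: bij_betw_def)
  qed
  then show ?thesis
    using assms bij_betw_trans[OF f(1) g(1)] by (auto simp: alg_equiv_def)
qed

lemma alg_equiv_Un:
  assumes "alg_equiv n A1 B1" "alg_equiv n A2 B2" "A1 \<inter> A2 = {}" "B1 \<inter> B2 = {}"
  shows "alg_equiv n (A1 \<union> A2) (B1 \<union> B2)"
proof -
  obtain f where f: "bij_betw f A1 B1" "alg_pmap n A1 f"
    using assms(1) by (auto simp: alg_equiv_def)
  obtain g where g: "bij_betw g A2 B2" "alg_pmap n A2 g"
    using assms(2) by (auto simp: alg_equiv_def)
  define h where "h z = (if z \<in> A1 then f z else g z)" for z
  have "bij_betw h A1 B1 \<longleftrightarrow> bij_betw f A1 B1" "bij_betw h A2 B2 \<longleftrightarrow> bij_betw g A2 B2"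
    using assms(3) by (auto simp: h_def intro!: bij_betw_cong)
  then have "bij_betw h A1 B1" "bij_betw h A2 B2"
    using f(1) g(1) by simp_all
  then have "bij_betw h (A1 \<union> A2) (B1 \<union> B2)"
    using assms(4) by (rule bij_betw_combine)
  moreover have "alg_pmap n A1 h"
    using f(2) by (rule alg_pmap_congD) (simp add: h_def)
  moreover have "alg_pmap n A2 h"
    using g(2) by (rule alg_pmap_congD) (use assms(3) in \<open>auto simp: h_def\<close>)
  ultimately show ?thesis
    using assms alg_pmap_Un by (auto simp: alg_equiv_def intro: bounded_blocks_Un)
qed

lemma alg_equiv_reindex_blocks:
  assumes "alg_set n C" "bounded_blocks n C" "inj_on \<rho> (fst ` C)"
  shows "alg_equiv n C ((\<lambda>z. (\<rho> (fst z), snd z)) ` C)"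
proof -
  obtain k where k: "C \<subseteq> {..<k} \<times> pts n"
    using assms(2) by (auto simp: bounded_blocks_def)
  obtain k' where "\<rho> ` {..<k} \<subseteq> {..<k'}"
    using finite_nat_bounded[of "\<rho> ` {..<k}"] by blast
  then have "(\<lambda>z. (\<rho> (fst z), snd z)) ` C \<subseteq> {..<k'} \<times> pts n"
    using k by force
  then have "bounded_blocks n ((\<lambda>z. (\<rho> (fst z), snd z)) ` C)"
    unfolding bounded_blocks_def by blast
  moreover have "inj_on (\<lambda>z. (\<rho> (fst z), snd z)) C"
    using assms(3) unfolding inj_on_def by (metis imageI prod.collapse prod.inject)
  ultimately show ?thesis
    using assms alg_pmap_reindex_blocks[OF assms(1)] by (auto simp: alg_equiv_def bij_betw_def)
qed

lemma alg_equiv_shift_blocks: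
  assumes "alg_equiv n A B"
  shows "alg_equiv n (shift_blocks k ` A) (shift_blocks k ` B)"
proof -
  obtain f where f: "bij_betw f A B" "alg_pmap n A f"
    using assms by (auto simp: alg_equiv_def)
  show ?thesis
    using assms bij_betw_shift_blocks_conj[OF f(1)] alg_pmap_shift_blocks_conj[OF f(2)]
    by (auto simp: alg_equiv_def intro: bounded_blocks_shift_blocks)
qed

section \<open>From equivalence to similarity\<close>

text \<open>For a bijection \<open>f : A \<rightarrow> B\<close> with inverse \<open>g\<close>, both inside the first \<open>k\<close> blocks, this is the
  permutation unitary \<open>[[V, 1 - V V\<^sup>*], [1 - V\<^sup>* V, V\<^sup>*]]\<close> on \<open>2k\<close> blocks built from the partial
  isometry \<open>V\<close> given by \<open>f\<close>.\<close>
definition rotation ::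
    "nat \<Rightarrow> nat \<Rightarrow> bpt set \<Rightarrow> bpt set \<Rightarrow> (bpt \<Rightarrow> bpt) \<Rightarrow> (bpt \<Rightarrow> bpt) \<Rightarrow> bpt \<Rightarrow> bpt" where
  "rotation n k A B f g z =
    (if z \<in> A then f z
     else if z \<in> {..<k} \<times> pts n then shift_blocks k z
     else if unshift_blocks k z \<in> B then shift_blocks k (g (unshift_blocks k z))
     else unshift_blocks k z)"

lemma rotation_inverse:
  assumes fA: "\<And>x. x \<in> A \<Longrightarrow> f x \<in> B" and gf: "\<And>x. x \<in> A \<Longrightarrow> g (f x) = x"
    and gB: "\<And>y. y \<in> B \<Longrightarrow> g y \<in> A" and fg: "\<And>y. y \<in> B \<Longrightarrow> f (g y) = y"
    and A: "A \<subseteq> {..<k} \<times> pts n" and B: "B \<subseteq> {..<k} \<times> pts n"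
    and z: "z \<in> {..<2 * k} \<times> pts n"
  shows "rotation n k A B f g z \<in> {..<2 * k} \<times> pts n \<and>
    rotation n k B A g f (rotation n k A B f g z) = z"
proof (cases "z \<in> A")
  case True
  then have "f z \<in> B"
    using fA by blast
  then have "f z \<in> {..<2 * k} \<times> pts n" "rotation n k B A g f (f z) = g (f z)"
    using B by (force simp: rotation_def)+
  moreover have "rotation n k A B f g z = f z"
    using True by (simp add: rotation_def)
  ultimately show ?thesis
    using True gf by simp
next
  case notA: False
  show ?thesis
  proof (cases "z \<in> {..<k} \<times> pts n")
    case True
    have "shift_blocks k z \<notin> B" "shift_blocks k z \<notin> {..<k} \<times> pts n"
      using B by (auto simp: shift_blocks_def)
    then show ?thesis
      using True notA by (auto simp: rotation_def shift_blocks_def unshift_blocks_def)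
  next
    case notD: False
    then have uz: "unshift_blocks k z \<in> {..<k} \<times> pts n"
      using z by (auto simp: unshift_blocks_def)
    have sz: "shift_blocks k (unshift_blocks k z) = z"
      using z notD by (auto simp: shift_blocks_def unshift_blocks_def)
    show ?thesis
    proof (cases "unshift_blocks k z \<in> B")
      case True
      let ?w = "shift_blocks k (g (unshift_blocks k z))"
      have gA: "g (unshift_blocks k z) \<in> A"
        using gB True by simp
      then have "?w \<notin> B" "?w \<notin> {..<k} \<times> pts n" "unshift_blocks k ?w = g (unshift_blocks k z)"
          "?w \<in> {..<2 * k} \<times> pts n"
        using A B by (auto simp: shift_blocks_def unshift_blocks_def)
      then show ?thesis
        using True notA notD gA fg sz by (auto simp: rotation_def)
    next
      case False
      then show ?thesis
        using notA notD uz sz by (auto simp: rotation_def)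
    qed
  qed
qed

lemma alg_pmap_rotation:
  assumes f: "alg_pmap n A f" and g: "alg_pmap n B g" "g ` B \<subseteq> A"
    and "alg_set n A" "alg_set n B" and A: "A \<subseteq> {..<k} \<times> pts n" and B: "B \<subseteq> {..<k} \<times> pts n"
  shows "alg_pmap n ({..<2 * k} \<times> pts n) (rotation n k A B f g)"
proof -
  let ?D = "{..<k} \<times> pts n"
  let ?r = "rotation n k A B f g"
  have "alg_pmap n A ?r"
    using f by (rule alg_pmap_congD) (simp add: rotation_def)
  moreover have "alg_pmap n (?D - A) ?r"
    using alg_pmap_reindex_blocks[OF alg_set_Diff_blocks[OF assms(4) A], where \<rho> = "\<lambda>j. j + k"]
    by (rule alg_pmap_congD) (simp add: rotation_def shift_blocks_def)
  moreover have "alg_pmap n (shift_blocks k ` B) ?r"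
    using alg_pmap_shift_blocks_conj[OF g(1)]
    by (rule alg_pmap_congD)
      (use A B in \<open>auto simp: rotation_def shift_blocks_def unshift_blocks_def\<close>)
  moreover have "alg_pmap n (shift_blocks k ` (?D - B)) ?r"
    using alg_pmap_reindex_blocks[OF alg_set_shift_blocks[OF alg_set_Diff_blocks[OF assms(5) B]],
        where \<rho> = "\<lambda>j. j - k"]
    by (rule alg_pmap_congD)
      (use A in \<open>auto simp: rotation_def shift_blocks_def unshift_blocks_def\<close>)
  ultimately have
    "alg_pmap n ((A \<union> (?D - A)) \<union> (shift_blocks k ` B \<union> shift_blocks k ` (?D - B))) ?r"
    by (intro alg_pmap_Un) (use A in \<open>auto simp: shift_blocks_def\<close>)
  moreover have
    "(A \<union> (?D - A)) \<union> (shift_blocks k ` B \<union> shift_blocks k ` (?D - B)) = {..<2 * k} \<times> pts n"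
    using A B by (auto simp flip: image_Un simp: Un_absorb1 shift_blocks_Times)
  ultimately show ?thesis
    by simp
qed

lemma mmult_pmap_mat_inverse:
  assumes sD: "s ` ({..<k} \<times> pts n) \<subseteq> {..<k} \<times> pts n"
    and rs: "\<And>z. z \<in> {..<k} \<times> pts n \<Longrightarrow> r z \<in> {..<k} \<times> pts n \<and> s (r z) = z"
  shows "mmult n k (pmap_mat ({..<k} \<times> pts n) s) (pmap_mat ({..<k} \<times> pts n) r) = munit n k"
proof -
  let ?D = "{..<k} \<times> pts n"
  have rD: "r ` ?D \<subseteq> ?D"
    using rs by blast
  have "mmult n k (pmap_mat ?D s) (pmap_mat ?D r) = pmap_mat {z \<in> ?D. r z \<in> ?D} (s \<circ> r)"
    using sD rD by (intro mmult_pmap_mat) (auto simp: lattice_pmap_def)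
  also have "\<dots> = munit n k"
    unfolding munit_eq_pmap_mat using rs by (intro pmap_mat_cong) auto
  finally show ?thesis .
qed

lemma mmult_conj_pmap_mat_id:
  assumes sr: "\<And>z. z \<in> {..<k} \<times> pts n \<Longrightarrow> s z \<in> {..<k} \<times> pts n \<and> r (s z) = z"
    and rs: "\<And>z. z \<in> {..<k} \<times> pts n \<Longrightarrow> r z \<in> {..<k} \<times> pts n \<and> s (r z) = z"
    and A: "A \<subseteq> {..<k} \<times> pts n"
  shows "mmult n k (mmult n k (pmap_mat ({..<k} \<times> pts n) s) (pmap_mat A id))
    (pmap_mat ({..<k} \<times> pts n) r) = pmap_mat (s ` A) id"
proof -
  let ?D = "{..<k} \<times> pts n"
  have sD: "s ` ?D \<subseteq> ?D" and rD: "r ` ?D \<subseteq> ?D" and sA: "s ` A \<subseteq> ?D"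
    using sr rs A by blast+
  have "mmult n k (pmap_mat ?D s) (pmap_mat A id) = pmap_mat A s"
    using sD A by (subst mmult_pmap_mat) (auto simp: lattice_pmap_def intro!: pmap_mat_cong)
  moreover have "mmult n k (pmap_mat A s) (pmap_mat ?D r) = pmap_mat {z \<in> ?D. r z \<in> A} (s \<circ> r)"
    using rD A sA by (intro mmult_pmap_mat) (auto simp: lattice_pmap_def)
  moreover have "{z \<in> ?D. r z \<in> A} = s ` A"
  proof (intro equalityI subsetI)
    fix z
    assume "z \<in> {z \<in> ?D. r z \<in> A}"
    then show "z \<in> s ` A"
      using rs by (metis (no_types, lifting) image_eqI mem_Collect_eq)
  next
    fix z
    assume "z \<in> s ` A"
    then obtain a where "a \<in> A" "z = s a"
      by blast
    then show "z \<in> {z \<in> ?D. r z \<in> A}"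
      using sr[of a] A by auto
  qed
  moreover have "pmap_mat (s ` A) (s \<circ> r) = pmap_mat (s ` A) id"
    using rs sA by (intro pmap_mat_cong) (simp_all add: subsetD)
  ultimately show ?thesis
    by simp
qed

lemma mequiv_pmap_mat_conj:
  assumes s: "bij_betw s ({..<k} \<times> pts n) ({..<k} \<times> pts n)" "alg_pmap n ({..<k} \<times> pts n) s"
    and A: "A \<subseteq> {..<k} \<times> pts n" "alg_set n A" "alg_set n (s ` A)"
  shows "mequiv n (pmap_mat A id) (pmap_mat (s ` A) id)"
proof -
  let ?D = "{..<k} \<times> pts n"
  define r where "r = inv_into ?D s"
  have sr: "s z \<in> ?D \<and> r (s z) = z" if "z \<in> ?D" for z
    using s(1) that by (auto simp: r_def bij_betw_def)
  have rs: "r z \<in> ?D \<and> s (r z) = z" if "z \<in> ?D" for z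
    using s(1) that by (auto simp: r_def bij_betw_def inv_into_into f_inv_into_f)
  have inj: "inj_on s ?D" "inj_on r ?D"
    by (metis inj_onI sr) (metis inj_onI rs)
  have r: "alg_pmap n ?D r"
    using alg_pmap_inv_into[OF inj(1) s(2)] s(1) by (simp add: r_def bij_betw_def)
  have sD: "s ` ?D = ?D" and rD: "r ` ?D = ?D"
    using s(1) bij_betw_inv_into[OF s(1)] by (simp_all add: r_def bij_betw_def)
  have sA: "s ` A \<subseteq> ?D"
    using A(1) sD by blast
  have lattice: "lattice_pmap n ?D s" "lattice_pmap n ?D r" "lattice_pmap n A id"
    unfolding lattice_pmap_def sD rD using A(1) by auto
  have bounds: "?D \<subseteq> {..<k} \<times> UNIV" "s ` ?D \<subseteq> {..<k} \<times> UNIV" "r ` ?D \<subseteq> {..<k} \<times> UNIV"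
    unfolding sD rD by auto
  have "inMk n k (pmap_mat ?D s)" "inMk n k (pmap_mat ?D r)"
    "inMk n k (pmap_mat A id)" "inMk n k (pmap_mat (s ` A) id)"
    using lattice inj s(2) r bounds A sA alg_pmap_id
    by (auto intro!: inMk_pmap_mat simp: lattice_pmap_def)
  moreover have "mmult n k (pmap_mat ?D s) (pmap_mat ?D r) = munit n k"
    "mmult n k (pmap_mat ?D r) (pmap_mat ?D s) = munit n k"
    using sD rD sr rs by (intro mmult_pmap_mat_inverse; simp)+
  moreover have "mmult n k (mmult n k (pmap_mat ?D s) (pmap_mat A id)) (pmap_mat ?D r) =
      pmap_mat (s ` A) id"
    using sr rs A(1) by (rule mmult_conj_pmap_mat_id)
  ultimately show ?thesis
    unfolding mequiv_def by blast
qed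

lemma mequiv_if_alg_equiv:
  assumes "alg_equiv n A B" "alg_set n A" "alg_set n B"
    and A: "A \<subseteq> {..<k} \<times> pts n" and B: "B \<subseteq> {..<k} \<times> pts n"
  shows "mequiv n (pmap_mat A id) (pmap_mat B id)"
proof -
  obtain f where f: "bij_betw f A B" "alg_pmap n A f"
    using assms(1) by (auto simp: alg_equiv_def)
  define g where "g = inv_into A f"
  have g: "bij_betw g B A" "alg_pmap n B g"
    using bij_betw_inv_into[OF f(1)] alg_pmap_inv_into[of f A n] f
    by (auto simp: g_def bij_betw_def)
  have fg: "\<And>x. x \<in> A \<Longrightarrow> f x \<in> B" "\<And>x. x \<in> A \<Longrightarrow> g (f x) = x"
    "\<And>y. y \<in> B \<Longrightarrow> g y \<in> A" "\<And>y. y \<in> B \<Longrightarrow> f (g y) = y"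
    using f(1) g(1) by (auto simp: g_def bij_betw_def f_inv_into_f)
  let ?D = "{..<2 * k} \<times> pts n"
  let ?s = "rotation n k A B f g" and ?s' = "rotation n k B A g f"
  have s_inv: "?s z \<in> ?D \<and> ?s' (?s z) = z" if "z \<in> ?D" for z
    using fg A B that by (rule rotation_inverse)
  have s'_inv: "?s' z \<in> ?D \<and> ?s (?s' z) = z" if "z \<in> ?D" for z
    using fg(3,4,1,2) B A that by (rule rotation_inverse)
  have "bij_betw ?s ?D ?D"
  proof (rule bij_betw_byWitness[where f' = ?s'])
    show "\<forall>z\<in>?D. ?s' (?s z) = z" "?s ` ?D \<subseteq> ?D"
      using s_inv by blast+
    show "\<forall>z\<in>?D. ?s (?s' z) = z" "?s' ` ?D \<subseteq> ?D"
      using s'_inv by blast+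
  qed
  moreover have "alg_pmap n ?D ?s"
    using g(1) by (intro alg_pmap_rotation f(2) g(2) assms(2,3) A B) (simp add: bij_betw_def)
  moreover have "A \<subseteq> ?D"
    using A by auto
  moreover have "?s ` A = B"
  proof -
    have "?s ` A = f ` A"
      by (rule image_cong) (simp_all add: rotation_def)
    then show ?thesis
      using f(1) by (simp add: bij_betw_def)
  qed
  ultimately show ?thesis
    using mequiv_pmap_mat_conj assms(2,3) by metis
qed

section \<open>Absorption\<close>

lemma alg_pmap_Times_to_block:
  assumes "\<And>j. j \<in> J \<Longrightarrow> pmap_kern S (h j) \<in> polyalg n"
  shows "alg_pmap n (J \<times> S) (\<lambda>z. (i, h (fst z) (snd z)))"
  unfolding alg_pmap_def
proof (intro allI)
  fix i' j
  have "pmap_mat (J \<times> S) (\<lambda>z. (i, h (fst z) (snd z))) i' j =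
      (if j \<in> J \<and> i = i' then pmap_kern S (h j) else kzero)"
    unfolding pmap_mat_def by (intro ext) (auto simp: pmap_kern_def kzero_def)
  then show "pmap_mat (J \<times> S) (\<lambda>z. (i, h (fst z) (snd z))) i' j \<in> polyalg n"
    using assms kzero_polyalg by simp
qed

lemma alg_equiv_coord_shift:
  assumes c: "c \<in> V" "c < n"
  shows "alg_equiv n ({i} \<times> supported_pts n V) ({i} \<times> {y \<in> supported_pts n V. b \<le> y ! c})"
  unfolding alg_equiv_def
proof (intro conjI exI)
  let ?S = "supported_pts n V"
  have upd: "y[c := v] \<in> ?S" if "y \<in> ?S" for y v
    using that c by (auto simp: supported_pts_iff nth_list_update)
  show "bounded_blocks n ({i} \<times> ?S)" "bounded_blocks n ({i} \<times> {y \<in> ?S. b \<le> y ! c})"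
    using supported_pts_subset by (auto intro!: bounded_blocks_Times[of _ "Suc i"])
  show "bij_betw (\<lambda>z. (i, (snd z)[c := snd z ! c + b])) ({i} \<times> ?S) ({i} \<times> {y \<in> ?S. b \<le> y ! c})"
    by (rule bij_betw_byWitness[where f' = "\<lambda>z. (i, (snd z)[c := snd z ! c - b])"])
      (use c upd in \<open>auto simp: supported_pts_iff\<close>)
  show "alg_pmap n ({i} \<times> ?S) (\<lambda>z. (i, (snd z)[c := snd z ! c + b]))"
    using c by (intro alg_pmap_Times_to_block supported_coord_shift_polyalg)
qed

lemma alg_equiv_blocks_to_coord:
  assumes c: "c \<notin> W" "c < n"
  shows "alg_equiv n ({a..<a + b} \<times> supported_pts n W)
    ({i} \<times> {y \<in> supported_pts n (insert c W). y ! c < b})"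
  unfolding alg_equiv_def
proof (intro conjI exI)
  let ?S = "supported_pts n W" and ?V = "supported_pts n (insert c W)"
  have zero: "y ! c = 0" if "y \<in> ?S" for y
    using that c by (auto simp: supported_pts_iff)
  show "bounded_blocks n ({a..<a + b} \<times> ?S)" "bounded_blocks n ({i} \<times> {y \<in> ?V. y ! c < b})"
    using supported_pts_subset
    by (intro bounded_blocks_Times[of _ "a + b"] bounded_blocks_Times[of _ "Suc i"], auto)+
  show "bij_betw (\<lambda>z. (i, (snd z)[c := fst z - a])) ({a..<a + b} \<times> ?S) ({i} \<times> {y \<in> ?V. y ! c < b})"
  proof (rule bij_betw_byWitness[where f' = "\<lambda>z. (a + snd z ! c, (snd z)[c := 0])"])
    show "\<forall>z \<in> {a..<a + b} \<times> ?S.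
        (\<lambda>z. (a + snd z ! c, (snd z)[c := 0])) ((\<lambda>z. (i, (snd z)[c := fst z - a])) z) = z"
    proof
      fix z
      assume z: "z \<in> {a..<a + b} \<times> ?S"
      then have "c < length (snd z)"
        using c by (auto simp: supported_pts_iff)
      then show "(\<lambda>z. (a + snd z ! c, (snd z)[c := 0])) ((\<lambda>z. (i, (snd z)[c := fst z - a])) z) = z"
        using z zero[of "snd z"] by (auto simp: prod_eq_iff) (metis list_update_id)
    qed
  qed (use c in \<open>auto simp: supported_pts_iff nth_list_update\<close>)
  have shift_eq:
    "pmap_kern ?S (\<lambda>y. y[c := j - a]) = pmap_kern ?S (\<lambda>y. y[c := y ! c + (j - a)])" for j
    using zero by (intro pmap_kern_cong) auto
  show "alg_pmap n ({a..<a + b} \<times> ?S) (\<lambda>z. (i, (snd z)[c := fst z - a]))"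
    by (intro alg_pmap_Times_to_block) (simp only: shift_eq supported_coord_shift_polyalg[OF c(2)])
qed

lemma alg_equiv_hilbert_hotel:
  assumes "c \<notin> W" "c < n" "0 < a"
  shows "alg_equiv n ({0} \<times> supported_pts n (insert c W) \<union> {a..<a + b} \<times> supported_pts n W)
    ({0} \<times> supported_pts n (insert c W))"
proof -
  let ?V = "supported_pts n (insert c W)"
  have "alg_equiv n ({0} \<times> ?V) ({0} \<times> {y \<in> ?V. b \<le> y ! c})"
    by (rule alg_equiv_coord_shift) (use assms(2) in simp_all)
  moreover have "alg_equiv n ({a..<a + b} \<times> supported_pts n W) ({0} \<times> {y \<in> ?V. y ! c < b})"
    using assms(1,2) by (rule alg_equiv_blocks_to_coord)
  ultimately have "alg_equiv n ({0} \<times> ?V \<union> {a..<a + b} \<times> supported_pts n W)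
      ({0} \<times> {y \<in> ?V. b \<le> y ! c} \<union> {0} \<times> {y \<in> ?V. y ! c < b})"
    by (rule alg_equiv_Un) (use assms(3) in auto)
  moreover have "{0::nat} \<times> {y \<in> ?V. b \<le> y ! c} \<union> {0} \<times> {y \<in> ?V. y ! c < b} = {0} \<times> ?V"
    by auto
  ultimately show ?thesis
    by simp
qed

lemma alg_equiv_absorb_supported:
  assumes "W' \<subset> W" "W \<subseteq> {..<n}" "0 < a"
  shows "alg_equiv n ({..<a} \<times> supported_pts n W \<union> shift_blocks a ` ({..<b} \<times> supported_pts n W'))
    ({..<a} \<times> supported_pts n W)"
proof -
  obtain c where c: "c \<in> W" "c \<notin> W'"
    using assms(1) by blast
  then have "c < n"
    using assms(2) by auto
  let ?F = "supported_pts n W" and ?F' = "supported_pts n W'"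
  let ?V = "supported_pts n (insert c W')"
  have VF: "?V \<subseteq> ?F"
    using assms(1) c by (auto simp: supported_pts_iff psubset_eq subset_iff)
  define rest where "rest = {0} \<times> (?F - ?V) \<union> {1..<a} \<times> ?F"
  have "alg_set n rest"
    unfolding rest_def using VF supported_pts_polyalg
    by (intro alg_set_Un alg_set_Times pmap_kern_Diff_polyalg) auto
  moreover have "bounded_blocks n rest"
    unfolding rest_def using supported_pts_subset assms(3)
    by (intro bounded_blocks_Un bounded_blocks_Times[of _ a]) auto
  moreover have "alg_equiv n ({0} \<times> ?V \<union> {a..<a + b} \<times> ?F') ({0} \<times> ?V)"
    using c(2) \<open>c < n\<close> assms(3) by (rule alg_equiv_hilbert_hotel)
  ultimately have "alg_equiv n (rest \<union> ({0} \<times> ?V \<union> {a..<a + b} \<times> ?F')) (rest \<union> {0} \<times> ?V)"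
    by (rule alg_equiv_Un[OF alg_equiv_refl]) (use assms(3) in \<open>auto simp: rest_def\<close>)
  moreover have "rest \<union> ({0} \<times> ?V \<union> {a..<a + b} \<times> ?F') =
      {..<a} \<times> ?F \<union> shift_blocks a ` ({..<b} \<times> ?F')"
    unfolding rest_def shift_blocks_Times using VF assms(3) by auto
  moreover have "rest \<union> {0} \<times> ?V = {..<a} \<times> ?F"
    unfolding rest_def using VF assms(3) by auto
  ultimately show ?thesis
    by metis
qed

lemma alg_equiv_swap_blocks:
  assumes "pmap_kern X id \<in> polyalg n" "pmap_kern Y id \<in> polyalg n" "X \<subseteq> pts n" "Y \<subseteq> pts n"
  shows "alg_equiv n ({..<l} \<times> X \<union> {l..<l + m} \<times> Y) ({..<m} \<times> Y \<union> {m..<m + l} \<times> X)"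
proof -
  define \<rho> where "\<rho> j = (if j < l then j + m else j - l)" for j
  let ?C = "{..<l} \<times> X \<union> {l..<l + m} \<times> Y"
  have alg: "alg_set n ?C"
    using assms by (intro alg_set_Un alg_set_Times) auto
  have bounded: "bounded_blocks n ?C"
    using assms by (intro bounded_blocks_Un bounded_blocks_Times[of _ "l + m"]) auto
  have inj: "inj_on \<rho> (fst ` ?C)"
    by (auto simp: inj_on_def \<rho>_def)
  have image: "(\<lambda>z. (\<rho> (fst z), snd z)) ` ?C = {..<m} \<times> Y \<union> {m..<m + l} \<times> X"
  proof -
    have C: "?C = {..<l} \<times> X \<union> shift_blocks l ` ({..<m} \<times> Y)"
      by (simp add: shift_blocks_Times)
    have "(\<lambda>z. (\<rho> (fst z), snd z)) ` ?C =
        shift_blocks m ` ({..<l} \<times> X) \<union> unshift_blocks l ` shift_blocks l ` ({..<m} \<times> Y)"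
      unfolding C image_Un
      by (intro arg_cong2[where f = "(\<union>)"] image_cong)
        (auto simp: \<rho>_def shift_blocks_def unshift_blocks_def)
    also have "\<dots> = {..<m} \<times> Y \<union> {m..<m + l} \<times> X"
      unfolding image_image unshift_shift_blocks image_ident unfolding shift_blocks_Times by auto
    finally show ?thesis .
  qed
  show ?thesis
    using alg_equiv_reindex_blocks[OF alg bounded inj] unfolding image .
qed

section \<open>The generators \<open>\<Theta>(P\<^sub>j\<^sub>,\<^sub>l)\<close>\<close>

lemma permuted_pt_eq_iff:
  assumes p: "p permutes {..<n}" and "length x = n" "length y = n"
  shows "map (\<lambda>k. x ! p k) [0..<n] = map (\<lambda>k. y ! p k) [0..<n] \<longleftrightarrow> x = y"
proof
  assume eq: "map (\<lambda>k. x ! p k) [0..<n] = map (\<lambda>k. y ! p k) [0..<n]"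
  show "x = y"
  proof (rule nth_equalityI)
    fix m
    assume "m < length x"
    then have "inv p m < n" "p (inv p m) = m"
      using assms permutes_in_image[OF permutes_inv[OF p]] permutes_inverses(1)[OF p] by auto
    then show "x ! m = y ! m"
      using arg_cong[OF eq, of "\<lambda>xs. xs ! inv p m"] by simp
  qed (use assms in simp)
qed simp

lemma permuted_pt_vanish_iff:
  assumes p: "p permutes {..<n}"
  shows "(\<forall>i. j \<le> i \<and> i < n \<longrightarrow> map (\<lambda>k. x ! p k) [0..<n] ! i = 0) \<longleftrightarrow>
    (\<forall>k<n. k \<notin> p ` {..<j} \<longrightarrow> x ! k = 0)"
proof
  assume vanish: "\<forall>i. j \<le> i \<and> i < n \<longrightarrow> map (\<lambda>k. x ! p k) [0..<n] ! i = 0"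
  show "\<forall>k<n. k \<notin> p ` {..<j} \<longrightarrow> x ! k = 0"
  proof (intro allI impI)
    fix k
    assume k: "k < n" "k \<notin> p ` {..<j}"
    have inv: "inv p k < n" "p (inv p k) = k"
      using k(1) permutes_in_image[OF permutes_inv[OF p]] permutes_inverses(1)[OF p] by auto
    then have "inv p k \<notin> {..<j}"
      using k(2) by (metis imageI)
    then have "map (\<lambda>k. x ! p k) [0..<n] ! inv p k = 0"
      using vanish inv(1) by simp
    then show "x ! k = 0"
      using inv by simp
  qed
next
  assume vanish: "\<forall>k<n. k \<notin> p ` {..<j} \<longrightarrow> x ! k = 0"
  show "\<forall>i. j \<le> i \<and> i < n \<longrightarrow> map (\<lambda>k. x ! p k) [0..<n] ! i = 0"
  proof (intro allI impI)
    fix i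
    assume i: "j \<le> i \<and> i < n"
    then have "p i \<notin> p ` {..<j}"
      using permutes_inj[OF p] by (auto simp: inj_eq)
    moreover have "p i < n"
      using i permutes_in_image[OF p] by simp
    ultimately have "x ! p i = 0"
      using vanish by simp
    then show "map (\<lambda>k. x ! p k) [0..<n] ! i = 0"
      using i by simp
  qed
qed

lemma perm_k_pj:
  assumes p: "p permutes {..<n}"
  shows "perm_k n p (pj n j) = pmap_kern (supported_pts n (p ` {..<j})) id"
proof (intro ext)
  fix x y
  show "perm_k n p (pj n j) x y = pmap_kern (supported_pts n (p ` {..<j})) id x y"
  proof (cases "x \<in> pts n \<and> y \<in> pts n")
    case True
    define xs where "xs = map (\<lambda>k. x ! p k) [0..<n]"
    define ys where "ys = map (\<lambda>k. y ! p k) [0..<n]"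
    have "perm_k n p (pj n j) x y = (if xs = ys \<and> (\<forall>i. j \<le> i \<and> i < n \<longrightarrow> xs ! i = 0) then 1 else 0)"
      using True by (simp add: perm_k_def pj_def xs_def ys_def pts_def)
    also have "\<dots> = pmap_kern (supported_pts n (p ` {..<j})) id x y"
      using True permuted_pt_eq_iff[OF p, of x y] permuted_pt_vanish_iff[OF p, of j x]
      unfolding xs_def[symmetric] ys_def[symmetric]
      by (auto simp: pmap_kern_def supported_pts_iff pts_def)
    finally show ?thesis .
  next
    case False
    then show ?thesis
      using supported_pts_subset by (auto simp: perm_k_def pmap_kern_def)
  qed
qed

lemma perm_m_Pjl:
  assumes "p permutes {..<n}"
  shows "perm_m n p (Pjl n j l) = pmap_mat ({..<l} \<times> supported_pts n (p ` {..<j})) id"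
proof (rule ext, rule ext)
  fix i k
  have "perm_k n p kzero = kzero"
    by (intro ext) (auto simp: perm_k_def kzero_def)
  then show "perm_m n p (Pjl n j l) i k = pmap_mat ({..<l} \<times> supported_pts n (p ` {..<j})) id i k"
    unfolding pmap_mat_id_entry perm_m_def Pjl_def
    using perm_k_pj[OF assms] by (cases "k < l") (auto simp: pmap_kern_def kzero_def)
qed

lemma Pjl_full: "Pjl n n m = pmap_mat ({..<m} \<times> pts n) id"
proof (rule ext, rule ext)
  fix i k
  have "pj n n = pmap_kern (pts n) id"
    by (intro ext) (auto simp: pj_def pmap_kern_def)
  then show "Pjl n n m i k = pmap_mat ({..<m} \<times> pts n) id i k"
    unfolding pmap_mat_id_entry Pjl_def by (cases "k < m") (auto simp: pmap_kern_def kzero_def)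
qed

lemma bsum_pmap_mat:
  assumes "A \<subseteq> {..<a} \<times> UNIV"
  shows "bsum a (pmap_mat A id) (pmap_mat B id) = pmap_mat (A \<union> shift_blocks a ` B) id"
proof (rule ext, rule ext)
  fix i k
  have "{y. (k, y) \<in> A \<union> shift_blocks a ` B} =
      (if k < a then {y. (k, y) \<in> A} else {y. (k - a, y) \<in> B})"
    using assms by (auto simp: shift_blocks_image_iff)
  then show "bsum a (pmap_mat A id) (pmap_mat B id) i k = pmap_mat (A \<union> shift_blocks a ` B) id i k"
    unfolding bsum_def pmap_mat_id_entry by auto
qed

fun gen_set :: "nat \<Rightarrow> (nat \<times> (nat \<Rightarrow> nat) \<times> nat) list \<Rightarrow> bpt set" where
  "gen_set n [] = {}"
| "gen_set n ((j, p, l) # gs) =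
    {..<l} \<times> supported_pts n (p ` {..<j}) \<union> shift_blocks l ` gen_set n gs"

lemma gen_set_subset: "gen_set n gs \<subseteq> {..<gsize gs} \<times> pts n"
proof (induction gs)
  case (Cons g gs)
  then show ?case
    using supported_pts_subset by (cases g) (force simp: shift_blocks_def)
qed simp

lemma alg_set_gen_set: "alg_set n (gen_set n gs)"
proof (induction gs)
  case Nil
  then show ?case
    by (simp add: alg_set_def kzero_polyalg)
next
  case (Cons g gs)
  obtain j p l where g: "g = (j, p, l)"
    by (cases g)
  show ?case
    unfolding g gen_set.simps
    by (rule alg_set_Un[OF alg_set_Times[OF supported_pts_polyalg]
          alg_set_shift_blocks[OF Cons.IH]])
      (auto simp: shift_blocks_def)
qed

lemma gsum_eq_pmap_mat:
  "\<forall>(j, p, l) \<in> set gs. p permutes {..<n} \<Longrightarrow> gsum n gs = pmap_mat (gen_set n gs) id"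
proof (induction gs)
  case Nil
  show ?case
    by (rule ext, rule ext) (simp only: gsum.simps gen_set.simps pmap_mat_id_entry, simp)
next
  case (Cons g gs)
  obtain j p l where g: "g = (j, p, l)"
    by (cases g)
  then have "p permutes {..<n}"
    using Cons.prems by auto
  then have "gsum n (g # gs) =
      bsum l (pmap_mat ({..<l} \<times> supported_pts n (p ` {..<j})) id) (pmap_mat (gen_set n gs) id)"
    using Cons by (simp add: g perm_m_Pjl id_def)
  also have "\<dots> = pmap_mat (gen_set n (g # gs)) id"
    by (subst bsum_pmap_mat) (auto simp: g)
  finally show ?case .
qed

lemma alg_equiv_absorb_gen_set:
  assumes m: "0 < m" and gens: "\<forall>(j, p, l) \<in> set gs. p ` {..<j} \<subset> {..<n}"
  shows "alg_equiv n (gen_set n gs \<union> shift_blocks (gsize gs) ` ({..<m} \<times> pts n)) ({..<m} \<times> pts n)"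
  using gens
proof (induction gs)
  case Nil
  have "shift_blocks 0 ` ({..<m} \<times> pts n) = {..<m} \<times> pts n"
    by (simp add: shift_blocks_Times atLeast0LessThan)
  then show ?case
    using supported_pts_all[of n] supported_pts_polyalg[of n "{..<n}"]
    by (auto intro!: alg_equiv_refl alg_set_Times bounded_blocks_Times[of _ m])
next
  case (Cons g gs)
  obtain j p l where g: "g = (j, p, l)"
    by (cases g)
  let ?I = "{..<m} \<times> pts n" and ?F = "supported_pts n (p ` {..<j})"
  let ?G = "gen_set n gs \<union> shift_blocks (gsize gs) ` ?I"
  have IH: "alg_equiv n ?G ?I"
    using Cons by auto
  have "alg_equiv n ({..<l} \<times> ?F \<union> shift_blocks l ` ?G) ({..<l} \<times> ?F \<union> shift_blocks l ` ?I)"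
    using supported_pts_subset supported_pts_polyalg
    by (intro alg_equiv_Un alg_equiv_refl alg_set_Times bounded_blocks_Times[of _ l]
        alg_equiv_shift_blocks IH)
      (auto simp: shift_blocks_def)
  also have "alg_equiv n ({..<l} \<times> ?F \<union> shift_blocks l ` ?I) (?I \<union> shift_blocks m ` ({..<l} \<times> ?F))"
    unfolding shift_blocks_Times
    using supported_pts_polyalg[of n "{..<n}"] supported_pts_polyalg[of n "p ` {..<j}"]
    by (intro alg_equiv_swap_blocks) (auto simp: supported_pts_subset supported_pts_all)
  also have "alg_equiv n (?I \<union> shift_blocks m ` ({..<l} \<times> ?F)) ?I"
    using alg_equiv_absorb_supported[of "p ` {..<j}" "{..<n}" n m l] Cons.prems m
    by (simp add: g supported_pts_all)
  finally show ?case
    by (simp add: g shift_blocks_shift_blocks image_Un Un_assoc)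
qed

lemma Omega_permutes: "(j, p) \<in> Omega n \<Longrightarrow> p permutes {..<n}"
  by (simp add: Omega_def shuffle_def)

lemma Omega_image_subset: "(j, p) \<in> Omega n \<Longrightarrow> p ` {..<j} \<subseteq> {..<n}"
  using permutes_in_image[OF Omega_permutes] by (fastforce simp: Omega_def)

lemma perm_m_Pjl_Omega:
  "(j, p) \<in> Omega n \<Longrightarrow>
    perm_m n p (Pjl n j l) = pmap_mat ({..<l} \<times> supported_pts n (p ` {..<j})) id"
  by (rule perm_m_Pjl[OF Omega_permutes])

lemma permutes_image_lessThan_psubset:
  fixes j n :: nat
  assumes "p permutes {..<n}" "j < n"
  shows "p ` {..<j} \<subset> {..<n}"
proof (rule psubsetI)
  have "p ` {..<j} \<subseteq> p ` {..<n}"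
    using assms(2) by (intro image_mono) auto
  then show "p ` {..<j} \<subseteq> {..<n}"
    by (simp only: permutes_image[OF assms(1)])
  have "card (p ` {..<j}) = j"
    using permutes_inj[OF assms(1)] by (simp add: card_image inj_on_subset)
  then show "p ` {..<j} \<noteq> {..<n}"
    using assms(2) by auto
qed

lemma alg_set_blocks_supported: "alg_set n (J \<times> supported_pts n W)"
  by (intro alg_set_Times supported_pts_polyalg)

lemma alg_set_blocks_pts: "alg_set n (J \<times> pts n)"
  using alg_set_blocks_supported[of n J "{..<n}"] by (simp add: supported_pts_all)

lemma mequiv_absorb_smaller_generator:
  assumes "0 < l" "(j, p) \<in> Omega n" "(j', p') \<in> Omega n" "omega_prec (j', p') (j, p)"
  shows "mequiv n (bsum l (perm_m n p (Pjl n j l)) (perm_m n p' (Pjl n j' l')))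
    (perm_m n p (Pjl n j l))"
proof -
  let ?F = "supported_pts n (p ` {..<j})" and ?F' = "supported_pts n (p' ` {..<j'})"
  let ?A = "{..<l} \<times> ?F \<union> shift_blocks l ` ({..<l'} \<times> ?F')"
  have "alg_equiv n ?A ({..<l} \<times> ?F)"
    using assms Omega_image_subset by (intro alg_equiv_absorb_supported) (auto simp: omega_prec_def)
  moreover have "alg_set n ?A"
    by (intro alg_set_Un alg_set_shift_blocks alg_set_blocks_supported Int_shift_blocks_empty) auto
  moreover have "alg_set n ({..<l} \<times> ?F)"
    by (rule alg_set_blocks_supported)
  moreover have "?A \<subseteq> {..<l + l'} \<times> pts n" "{..<l} \<times> ?F \<subseteq> {..<l + l'} \<times> pts n"
    using supported_pts_subset by (auto simp: shift_blocks_Times)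
  ultimately have "mequiv n (pmap_mat ?A id) (pmap_mat ({..<l} \<times> ?F) id)"
    by (rule mequiv_if_alg_equiv)
  then show ?thesis
    unfolding perm_m_Pjl_Omega[OF assms(2)] perm_m_Pjl_Omega[OF assms(3)]
    by (subst bsum_pmap_mat) auto
qed

lemma mequiv_merge_generators:
  assumes "(j, p) \<in> Omega n"
  shows "mequiv n (bsum l (perm_m n p (Pjl n j l)) (perm_m n p (Pjl n j l')))
    (perm_m n p (Pjl n j (l + l')))"
proof -
  let ?C = "{..<l + l'} \<times> supported_pts n (p ` {..<j})"
  have "{..<l} \<times> S \<union> shift_blocks l ` ({..<l'} \<times> S) = {..<l + l'} \<times> S" for S
    by (auto simp: shift_blocks_Times)
  then have "bsum l (perm_m n p (Pjl n j l)) (perm_m n p (Pjl n j l')) = pmap_mat ?C id"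
    unfolding perm_m_Pjl_Omega[OF assms] by (subst bsum_pmap_mat) auto
  moreover have "mequiv n (pmap_mat ?C id) (pmap_mat ?C id)"
    using supported_pts_subset
    by (intro mequiv_if_alg_equiv[OF alg_equiv_refl] alg_set_blocks_supported)
      (auto simp: bounded_blocks_def)
  ultimately show ?thesis
    unfolding perm_m_Pjl_Omega[OF assms] by simp
qed

lemma mequiv_absorb_into_identity:
  assumes "0 < m" and gens: "\<forall>(j, p, l) \<in> set gs. (j, p) \<in> Omega n \<and> j < n"
  shows "mequiv n (bsum (gsize gs) (gsum n gs) (Pjl n n m)) (Pjl n n m)"
proof -
  let ?I = "{..<m} \<times> pts n"
  let ?A = "gen_set n gs \<union> shift_blocks (gsize gs) ` ?I"
  have "\<forall>(j, p, l) \<in> set gs. p ` {..<j} \<subset> {..<n}"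
  proof (intro ballI, clarify)
    fix j p l
    assume "(j, p, l) \<in> set gs"
    then show "p ` {..<j} \<subset> {..<n}"
      using gens by (intro permutes_image_lessThan_psubset[OF Omega_permutes]) auto
  qed
  then have "alg_equiv n ?A ?I"
    by (rule alg_equiv_absorb_gen_set[OF assms(1)])
  moreover have "alg_set n ?A"
    using gen_set_subset[of n gs]
    by (intro alg_set_Un alg_set_gen_set alg_set_shift_blocks alg_set_blocks_pts
        Int_shift_blocks_empty) auto
  moreover have "alg_set n ?I"
    by (rule alg_set_blocks_pts)
  moreover have "?A \<subseteq> {..<gsize gs + m} \<times> pts n" "?I \<subseteq> {..<gsize gs + m} \<times> pts n"
    using gen_set_subset[of n gs] by (auto simp: shift_blocks_Times)
  ultimately have "mequiv n (pmap_mat ?A id) (pmap_mat ?I id)"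
    by (rule mequiv_if_alg_equiv)
  moreover have "gsum n gs = pmap_mat (gen_set n gs) id"
    using gens by (intro gsum_eq_pmap_mat) (auto dest: Omega_permutes)
  moreover have "gen_set n gs \<subseteq> {..<gsize gs} \<times> UNIV"
    using gen_set_subset by blast
  ultimately show ?thesis
    unfolding Pjl_full by (simp add: bsum_pmap_mat)
qed

theorem proposition3:
  fixes n :: nat
  assumes "n \<ge> 1"
  shows "(\<forall>l l' j j' p p'. 0 < l \<longrightarrow> 0 < l' \<longrightarrow> (j, p) \<in> Omega n \<longrightarrow> (j', p') \<in> Omega n \<longrightarrow>
            omega_prec (j', p') (j, p) \<longrightarrow>
            mequiv n (bsum l (perm_m n p (Pjl n j l)) (perm_m n p' (Pjl n j' l')))
                     (perm_m n p (Pjl n j l)))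
       \<and> (\<forall>l l' j p. (j, p) \<in> Omega n \<longrightarrow>
            mequiv n (bsum l (perm_m n p (Pjl n j l)) (perm_m n p (Pjl n j l')))
                     (perm_m n p (Pjl n j (l + l'))))
       \<and> (\<forall>gs m. (\<forall>(j, p, l) \<in> set gs. (j, p) \<in> Omega n \<and> j \<le> n - 1) \<longrightarrow> 1 \<le> m \<longrightarrow>
            mequiv n (bsum (gsize gs) (gsum n gs) (Pjl n n m)) (Pjl n n m))"
proof (intro conjI allI impI)
  fix l l' j j' :: nat and p p' :: "nat \<Rightarrow> nat"
  assume "0 < l" "(j, p) \<in> Omega n" "(j', p') \<in> Omega n" "omega_prec (j', p') (j, p)"
  then show "mequiv n (bsum l (perm_m n p (Pjl n j l)) (perm_m n p' (Pjl n j' l')))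
      (perm_m n p (Pjl n j l))"
    by (rule mequiv_absorb_smaller_generator)
next
  fix l l' j :: nat and p :: "nat \<Rightarrow> nat"
  assume "(j, p) \<in> Omega n"
  then show "mequiv n (bsum l (perm_m n p (Pjl n j l)) (perm_m n p (Pjl n j l')))
      (perm_m n p (Pjl n j (l + l')))"
    by (rule mequiv_merge_generators)
next
  fix gs :: "(nat \<times> (nat \<Rightarrow> nat) \<times> nat) list" and m :: nat
  assume "\<forall>(j, p, l) \<in> set gs. (j, p) \<in> Omega n \<and> j \<le> n - 1" "1 \<le> m"
  then show "mequiv n (bsum (gsize gs) (gsum n gs) (Pjl n n m)) (Pjl n n m)"
    using assms by (intro mequiv_absorb_into_identity) auto
qed

end
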